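(* (a) If $(\mathcal{A}_1^s)$ and $(\mathcal{A}_2^s)$ are satisfied for every $s\in\mathbb N_0$, then $\{\Theta_s\}_{s\in\mathbb N_0}$ is a sequence of solid $CB$-spaces with the properties (i)–(iii) below (with $Y_s=\Theta_s$, $|\cdot|_s=\|\cdot\|_s$) such that $\{g_i|_{X_F}\}_{i=1}^\infty$ is an $F$-Bessel sequence for $X_F$ with respect to $\Theta_F:=\bigcap_{s\in\mathbb N_0}\Theta_s$. (b) If $(\mathcal{A}_1^s)$, $(\mathcal{A}_2^s)$ and $(\mathcal{A}_3^s)$ are satisfied for every $s\in\mathbb N_0$, then $\{g_i|_{X_F}\}_{i=1}^\infty$ is a pre-$F$-frame for $X_F$ with respect to $\Theta_F$.
   Context: A sequence $\{Y_s,|\cdot|_s\}_{s\in\mathbb N_0}$ of separable Banach spaces is said to have properties (i)–(iii) if: (i) $\{\mathbf 0\}\neq Y_F:=\bigcap_{s\in\mathbb N_0}Y_s\subseteq\cdots\subseteq Y_2\subseteq Y_1\subseteq Y_0$; (ii) $|\cdot|_0\le|\cdot|_1\le|\cdot|_2\le\cdots$; (iii) $Y_F$ is dense in $Y_s$ for every $s\in\mathbb N_0$. Then $Y_F$ is a Fréchet space with the norms $|\cdot|_s$. Let $\{X_s,\|\cdot\|_s\}_{s\in\mathbb N_0}$ be a sequence of reflexive Banach spaces with properties (i)–(iii), $X_F=\bigcap_s X_s$, and let $\{g_i\}_{i=1}^\infty\in(X_0^* )^{\mathbb N}$ with each $g_i$ a nonzero functional. For every $s\in\mathbb N_0$ and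 every scalar sequence $c=\{c_i\}_{i=1}^\infty$ put $M^c_s:=\{f\in X_s: |c_i|\le|g_i(f)|,\ i\in\mathbb N\}$, and define $\Theta_s:=\{c=\{c_i\}: M^c_s\neq\varnothing\}$ with $\|c\|_s:=\inf\{\|f\|_s: f\in M^c_s\}$. For a sequence $c$ and $k\in\mathbb N$, $c^{(k)}:=\{0,\dots,0,c_{k+1},c_{k+2},\dots\}$ ($k$ zeros). Conditions: $(\mathcal{A}_1^s)$: for all $c,d\in\Theta_s$, all $f\in M^c_s$, $h\in M^d_s$, there exists $r\in M^{c+d}_s$ with $\|r\|_s\le\|f\|_s+\|h\|_s$. $(\mathcal{A}_2^s)$: for all $c\in\Theta_s$ and $\varepsilon>0$ there exist $k\in\mathbb N$ and $f\in M^{c^{(k)}}_s$ with $\|f\|_s<\varepsilon$. $(\mathcal{A}_3^s)$: there exists $A_s\in(0,1]$ such that for every $f\in X_s$, $\widetilde f\in M_s^{\{g_i(f)\}_{i=1}^\infty}$ implies $A_s\|f\|_s\le\|\widetilde f\|_s$. Definitions: a sequence space $\Theta$ is solid if $\{c_i\}\in\Theta$ and $|d_i|\le|c_i|$ for all $i$ imply $\{d_i\}\in\Theta$ and $\|\{d_i\}\|\le\|\{c_i\}\|$; a $BK$-space is a Banach sequence space with continuous coordinate functionals; a $CB$-space is a $BK$-space in which the canonical vectors form a Schauder basis. Given $\{\Theta_s\}$ a sequence of $BK$-spaces with (i)–(iii), $\{g_i\}\in(X_F^* )^{\mathbb N}$ is an $F$-Bessel sequence for $X_F$ with respect to $\Theta_F$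 if $\{g_i(f)\}\in\Theta_F$ for all $f\in X_F$ and for each $s$ there is $B_s<\infty$ with $\|\{g_i(f)\}\|_s\le B_s\|f\|_s$, $f\in X_F$; it is a pre-$F$-frame if moreover for each $s$ there is $A_s>0$ with $A_s\|f\|_s\le\|\{g_i(f)\}\|_s$, $f\in X_F$. *)

theory Defs
  imports "HOL-Analysis.Analysis" "HOL-Library.Function_Algebras"
begin

text \<open>Abstract setting: all spaces live in one ambient vector space of type 'a over the
scalar field 'k (real or complex), with scalar multiplication scl.  A "space" is a carrier
set together with a real-valued function playing the role of its norm.\<close>

definition subspace_on :: "('k::field \<Rightarrow> 'a::ab_group_add \<Rightarrow> 'a) \<Rightarrow> 'a set \<Rightarrow> bool" where
  "subspace_on scl X \<longleftrightarrow> 0 \<in> X \<and> (\<forall>x\<in>X. \<forall>y\<in>X. x + y \<in> X) \<and> (\<forall>a. \<forall>x\<in>X. scl a x \<in> X)"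

definition norm_on :: "('k::real_normed_field \<Rightarrow> 'a::ab_group_add \<Rightarrow> 'a) \<Rightarrow> 'a set \<Rightarrow> ('a \<Rightarrow> real) \<Rightarrow> bool" where
  "norm_on scl X N \<longleftrightarrow>
     (\<forall>x\<in>X. 0 \<le> N x \<and> (N x = 0 \<longleftrightarrow> x = 0)) \<and>
     (\<forall>x\<in>X. \<forall>y\<in>X. N (x + y) \<le> N x + N y) \<and>
     (\<forall>a. \<forall>x\<in>X. N (scl a x) = norm a * N x)"

definition complete_on :: "'a::ab_group_add set \<Rightarrow> ('a \<Rightarrow> real) \<Rightarrow> bool" where
  "complete_on X N \<longleftrightarrow>
     (\<forall>u::nat \<Rightarrow> 'a. (\<forall>n. u n \<in> X) \<and> (\<forall>e>0. \<exists>M. \<forall>m\<ge>M. \<forall>n\<ge>M. N (u m - u n) < e)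
        \<longrightarrow> (\<exists>x\<in>X. (\<lambda>n. N (u n - x)) \<longlonglongrightarrow> 0))"

definition banach_on :: "('k::real_normed_field \<Rightarrow> 'a::ab_group_add \<Rightarrow> 'a) \<Rightarrow> 'a set \<Rightarrow> ('a \<Rightarrow> real) \<Rightarrow> bool" where
  "banach_on scl X N \<longleftrightarrow> subspace_on scl X \<and> norm_on scl X N \<and> complete_on X N"

definition dense_on :: "'a::ab_group_add set \<Rightarrow> 'a set \<Rightarrow> ('a \<Rightarrow> real) \<Rightarrow> bool" where
  "dense_on Y X N \<longleftrightarrow> Y \<subseteq> X \<and> (\<forall>x\<in>X. \<forall>e>0. \<exists>y\<in>Y. N (x - y) < e)"

definition separable_on :: "'a::ab_group_add set \<Rightarrow> ('a \<Rightarrow> real) \<Rightarrow> bool" where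
  "separable_on X N \<longleftrightarrow> (\<exists>D. countable D \<and> dense_on D X N)"

definition props_iii :: "('k::real_normed_field \<Rightarrow> 'a::ab_group_add \<Rightarrow> 'a) \<Rightarrow> (nat \<Rightarrow> 'a set) \<Rightarrow> (nat \<Rightarrow> 'a \<Rightarrow> real) \<Rightarrow> bool" where
  "props_iii scl Y N \<longleftrightarrow>
     (\<forall>s. banach_on scl (Y s) (N s) \<and> separable_on (Y s) (N s)) \<and>
     (\<Inter>s. Y s) \<noteq> {0} \<and> (\<forall>s. Y (Suc s) \<subseteq> Y s) \<and>
     (\<forall>s. \<forall>y\<in>Y (Suc s). N s y \<le> N (Suc s) y) \<and>
     (\<forall>s. dense_on (\<Inter>s. Y s) (Y s) (N s))"

definition lin_fun :: "('k::field \<Rightarrow> 'a::ab_group_add \<Rightarrow> 'a) \<Rightarrow> 'a set \<Rightarrow> ('a \<Rightarrow> 'k) \<Rightarrow> bool" where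
  "lin_fun scl X \<phi> \<longleftrightarrow> (\<forall>x\<in>X. \<forall>y\<in>X. \<phi> (x + y) = \<phi> x + \<phi> y) \<and> (\<forall>a. \<forall>x\<in>X. \<phi> (scl a x) = a * \<phi> x)"

definition bounded_fun :: "'a set \<Rightarrow> ('a \<Rightarrow> real) \<Rightarrow> ('a \<Rightarrow> 'k::real_normed_field) \<Rightarrow> bool" where
  "bounded_fun X N \<phi> \<longleftrightarrow> (\<exists>C. \<forall>x\<in>X. norm (\<phi> x) \<le> C * N x)"

text \<open>Dual space; functionals are normalised to vanish outside the carrier.\<close>
definition dual_set :: "('k::real_normed_field \<Rightarrow> 'a::ab_group_add \<Rightarrow> 'a) \<Rightarrow> 'a set \<Rightarrow> ('a \<Rightarrow> real) \<Rightarrow> ('a \<Rightarrow> 'k) set" where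
  "dual_set scl X N = {\<phi>. lin_fun scl X \<phi> \<and> bounded_fun X N \<phi> \<and> (\<forall>x. x \<notin> X \<longrightarrow> \<phi> x = 0)}"

definition dual_norm :: "'a set \<Rightarrow> ('a \<Rightarrow> real) \<Rightarrow> ('a \<Rightarrow> 'k::real_normed_field) \<Rightarrow> real" where
  "dual_norm X N \<phi> = Sup {norm (\<phi> x) | x. x \<in> X \<and> N x \<le> 1}"

definition reflexive_on :: "('k::real_normed_field \<Rightarrow> 'a::ab_group_add \<Rightarrow> 'a) \<Rightarrow> 'a set \<Rightarrow> ('a \<Rightarrow> real) \<Rightarrow> bool" where
  "reflexive_on scl X N \<longleftrightarrow>
     (\<forall>\<Phi> :: ('a \<Rightarrow> 'k) \<Rightarrow> 'k.
        (\<forall>\<phi>\<in>dual_set scl X N. \<forall>\<psi>\<in>dual_set scl X N. \<Phi> (\<lambda>x. \<phi> x + \<psi> x) = \<Phi> \<phi> + \<Phi> \<psi>) \<and>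
        (\<forall>a. \<forall>\<phi>\<in>dual_set scl X N. \<Phi> (\<lambda>x. a * \<phi> x) = a * \<Phi> \<phi>) \<and>
        (\<exists>C. \<forall>\<phi>\<in>dual_set scl X N. norm (\<Phi> \<phi>) \<le> C * dual_norm X N \<phi>)
      \<longrightarrow> (\<exists>x\<in>X. \<forall>\<phi>\<in>dual_set scl X N. \<Phi> \<phi> = \<phi> x))"

text \<open>Sequence spaces: scalar sequences nat => 'k (index 0 corresponds to index 1 of the paper).\<close>
definition seq_scl :: "'k::real_normed_field \<Rightarrow> (nat \<Rightarrow> 'k) \<Rightarrow> (nat \<Rightarrow> 'k)" where
  "seq_scl a c = (\<lambda>i. a * c i)"

definition Mset :: "(nat \<Rightarrow> 'a set) \<Rightarrow> (nat \<Rightarrow> 'a \<Rightarrow> 'k::real_normed_field) \<Rightarrow> nat \<Rightarrow> (nat \<Rightarrow> 'k) \<Rightarrow> 'a set" where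
  "Mset X g s c = {f \<in> X s. \<forall>i. norm (c i) \<le> norm (g i f)}"

definition Theta :: "(nat \<Rightarrow> 'a set) \<Rightarrow> (nat \<Rightarrow> 'a \<Rightarrow> 'k::real_normed_field) \<Rightarrow> nat \<Rightarrow> (nat \<Rightarrow> 'k) set" where
  "Theta X g s = {c. Mset X g s c \<noteq> {}}"

definition Theta_norm :: "(nat \<Rightarrow> 'a set) \<Rightarrow> (nat \<Rightarrow> 'a \<Rightarrow> real) \<Rightarrow> (nat \<Rightarrow> 'a \<Rightarrow> 'k::real_normed_field) \<Rightarrow> nat \<Rightarrow> (nat \<Rightarrow> 'k) \<Rightarrow> real" where
  "Theta_norm X N g s c = Inf (N s ` Mset X g s c)"

definition tail_seq :: "nat \<Rightarrow> (nat \<Rightarrow> 'k::zero) \<Rightarrow> nat \<Rightarrow> 'k" where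
  "tail_seq k c = (\<lambda>i. if i < k then 0 else c i)"

definition condA1 :: "(nat \<Rightarrow> 'a set) \<Rightarrow> (nat \<Rightarrow> 'a \<Rightarrow> real) \<Rightarrow> (nat \<Rightarrow> 'a \<Rightarrow> 'k::real_normed_field) \<Rightarrow> nat \<Rightarrow> bool" where
  "condA1 X N g s \<longleftrightarrow>
     (\<forall>c\<in>Theta X g s. \<forall>d\<in>Theta X g s. \<forall>f\<in>Mset X g s c. \<forall>h\<in>Mset X g s d.
        \<exists>r\<in>Mset X g s (\<lambda>i. c i + d i). N s r \<le> N s f + N s h)"

definition condA2 :: "(nat \<Rightarrow> 'a set) \<Rightarrow> (nat \<Rightarrow> 'a \<Rightarrow> real) \<Rightarrow> (nat \<Rightarrow> 'a \<Rightarrow> 'k::real_normed_field) \<Rightarrow> nat \<Rightarrow> bool" where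
  "condA2 X N g s \<longleftrightarrow>
     (\<forall>c\<in>Theta X g s. \<forall>e>0. \<exists>k\<ge>1. \<exists>f\<in>Mset X g s (tail_seq k c). N s f < e)"

definition condA3 :: "(nat \<Rightarrow> 'a set) \<Rightarrow> (nat \<Rightarrow> 'a \<Rightarrow> real) \<Rightarrow> (nat \<Rightarrow> 'a \<Rightarrow> 'k::real_normed_field) \<Rightarrow> nat \<Rightarrow> bool" where
  "condA3 X N g s \<longleftrightarrow>
     (\<exists>A. 0 < A \<and> A \<le> 1 \<and>
        (\<forall>f\<in>X s. \<forall>ft\<in>Mset X g s (\<lambda>i. g i f). A * N s f \<le> N s ft))"

definition solid :: "(nat \<Rightarrow> 'k::real_normed_field) set \<Rightarrow> ((nat \<Rightarrow> 'k) \<Rightarrow> real) \<Rightarrow> bool" where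
  "solid T nrm \<longleftrightarrow> (\<forall>c\<in>T. \<forall>d. (\<forall>i. norm (d i) \<le> norm (c i)) \<longrightarrow> d \<in> T \<and> nrm d \<le> nrm c)"

definition BK_space :: "(nat \<Rightarrow> 'k::real_normed_field) set \<Rightarrow> ((nat \<Rightarrow> 'k) \<Rightarrow> real) \<Rightarrow> bool" where
  "BK_space T nrm \<longleftrightarrow> banach_on seq_scl T nrm \<and> (\<forall>i. \<exists>C. \<forall>c\<in>T. norm (c i) \<le> C * nrm c)"

definition unit_seq :: "nat \<Rightarrow> nat \<Rightarrow> 'k::zero_neq_one" where
  "unit_seq j = (\<lambda>i. if i = j then 1 else 0)"

definition CB_space :: "(nat \<Rightarrow> 'k::real_normed_field) set \<Rightarrow> ((nat \<Rightarrow> 'k) \<Rightarrow> real) \<Rightarrow> bool" where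
  "CB_space T nrm \<longleftrightarrow> BK_space T nrm \<and> (\<forall>j. unit_seq j \<in> T) \<and>
     (\<forall>c\<in>T. \<exists>!a::nat \<Rightarrow> 'k. (\<lambda>n. nrm (c - (\<Sum>j<n. seq_scl (a j) (unit_seq j)))) \<longlonglongrightarrow> 0)"

definition F_Bessel :: "('k::real_normed_field \<Rightarrow> 'a::ab_group_add \<Rightarrow> 'a) \<Rightarrow> (nat \<Rightarrow> 'a set) \<Rightarrow> (nat \<Rightarrow> 'a \<Rightarrow> real)
    \<Rightarrow> (nat \<Rightarrow> 'a \<Rightarrow> 'k) \<Rightarrow> (nat \<Rightarrow> (nat \<Rightarrow> 'k) set) \<Rightarrow> (nat \<Rightarrow> (nat \<Rightarrow> 'k) \<Rightarrow> real) \<Rightarrow> bool" where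
  "F_Bessel scl X N g T nrm \<longleftrightarrow>
     (\<forall>i. lin_fun scl (\<Inter>s. X s) (g i) \<and> (\<exists>s C. \<forall>f\<in>(\<Inter>s. X s). norm (g i f) \<le> C * N s f)) \<and>
     (\<forall>f\<in>(\<Inter>s. X s). (\<lambda>i. g i f) \<in> (\<Inter>s. T s)) \<and>
     (\<forall>s. \<exists>B. \<forall>f\<in>(\<Inter>s. X s). nrm s (\<lambda>i. g i f) \<le> B * N s f)"

definition pre_F_frame :: "('k::real_normed_field \<Rightarrow> 'a::ab_group_add \<Rightarrow> 'a) \<Rightarrow> (nat \<Rightarrow> 'a set) \<Rightarrow> (nat \<Rightarrow> 'a \<Rightarrow> real)
    \<Rightarrow> (nat \<Rightarrow> 'a \<Rightarrow> 'k) \<Rightarrow> (nat \<Rightarrow> (nat \<Rightarrow> 'k) set) \<Rightarrow> (nat \<Rightarrow> (nat \<Rightarrow> 'k) \<Rightarrow> real) \<Rightarrow> bool" where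
  "pre_F_frame scl X N g T nrm \<longleftrightarrow> F_Bessel scl X N g T nrm \<and>
     (\<forall>s. \<exists>A>0. \<forall>f\<in>(\<Inter>s. X s). A * N s f \<le> nrm s (\<lambda>i. g i f))"

end

theory Submission
  imports Defs "HOL-Computational_Algebra.Fundamental_Theorem_Algebra"
begin

text \<open>
  Since \<open>\<parallel>c\<parallel>\<^sub>s\<close> is an infimum over \<open>M\<^sup>c\<^sub>s\<close> and every \<open>f \<in> X\<^sub>s\<close> belongs to \<open>M\<^sup>c\<^sub>s\<close> for its own coefficient
  sequence \<open>c = {g\<^sub>i(f)}\<close>, the Bessel bound (with constant 1) and, under \<open>(\<A>\<^sub>3)\<close>, the lower frame bound
  are immediate; solidity holds because \<open>M\<^sup>c\<^sub>s\<close> shrinks as \<open>|c|\<close> grows.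
  \<open>(\<A>\<^sub>1)\<close> gives the triangle inequality, and \<open>(\<A>\<^sub>2)\<close> makes tails small, whence finite sequences
  are dense, the unit vectors form a Schauder basis, and a dominated convergence principle holds.

  Completeness is the delicate point. For a rapidly Cauchy sequence, \<open>(\<A>\<^sub>1)\<close> produces elements of
  \<open>X\<^sub>s\<close> of norm at most 2 dominating the partial sums of \<open>\<Sum>\<^sub>k |d\<^sub>k|\<close> coordinatewise; a limit of
  these along an ultrafilter defines a bounded functional on the dual, which reflexivity turns into
  a point of \<open>X\<^sub>s\<close> dominating the whole series.  Limits along ultrafilters exist because closed balls
  of the scalar field are compact: every element \<open>\<xi>\<close> of a real normed field satisfies a real
  quadratic equation \<open>(\<xi> - s)\<^sup>2 + T = 0\<close> with \<open>T \<ge> 0\<close> (a Mazur-type minimisation argument), so the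
  field is spanned over \<open>\<real>\<close> by \<open>1\<close> and, if there is one, a square root of \<open>-1\<close>.
\<close>

section \<open>Real normed fields are locally compact\<close>

lemma map_poly_of_real_add:
  "map_poly (of_real :: real \<Rightarrow> 'b::real_algebra_1) (p + q) = map_poly of_real p + map_poly of_real q"
  by (intro poly_eqI) (simp add: coeff_map_poly)

lemma map_poly_of_real_diff:
  "map_poly (of_real :: real \<Rightarrow> 'b::real_algebra_1) (p - q) = map_poly of_real p - map_poly of_real q"
  by (intro poly_eqI) (simp add: coeff_map_poly)

lemma map_poly_of_real_mult:
  "map_poly (of_real :: real \<Rightarrow> 'b::{real_algebra_1,comm_ring_1}) (p * q) = map_poly of_real p * map_poly of_real q"
  by (intro poly_eqI) (simp add: coeff_map_poly coeff_mult of_real_sum)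

lemma map_poly_of_real_power:
  "map_poly (of_real :: real \<Rightarrow> 'b::{real_algebra_1,comm_ring_1}) (p ^ n) = map_poly of_real p ^ n"
  by (induction n) (simp_all add: map_poly_of_real_mult)

lemma poly_map_poly_of_real:
  "poly (map_poly (of_real :: real \<Rightarrow> 'b::{real_algebra_1,comm_ring_1}) p) (of_real x) = of_real (poly p x)"
  by (induction p) (simp_all add: map_poly_pCons)

lemma poly_map_poly_of_real_monic_quadratic:
  "poly (map_poly (of_real :: real \<Rightarrow> 'b::{real_algebra_1,comm_ring_1}) [:a, b, 1:]) z
     = of_real a + of_real b * z + z ^ 2"
  by (simp add: map_poly_pCons algebra_simps power2_eq_square)

lemma const_poly_power: "[:c:] ^ n = [:c ^ n:]"
  by (induction n) (auto simp: one_pCons mult.commute)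

lemma real_poly_nonreal_root_quadratic_dvd:
  fixes R :: "real poly"
  assumes root: "poly (map_poly complex_of_real R) \<alpha> = 0" and nonreal: "Im \<alpha> \<noteq> 0"
  shows "[:Re \<alpha> ^ 2 + Im \<alpha> ^ 2, -2 * Re \<alpha>, 1:] dvd R"
proof -
  define D :: "real poly" where "D = [:Re \<alpha> ^ 2 + Im \<alpha> ^ 2, -2 * Re \<alpha>, 1:]"
  define M where "M = R mod D"
  have "D \<noteq> 0" and "degree D = 2" unfolding D_def by auto
  then have M_lin: "M = [:coeff M 0, coeff M 1:]"
    using degree_mod_less[of D R] unfolding M_def
    by (cases "R mod D = 0")
       (auto intro!: poly_eqI simp: coeff_pCons coeff_eq_0 split: nat.splits)
  have "poly (map_poly complex_of_real D) \<alpha> = 0"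
    unfolding D_def poly_map_poly_of_real_monic_quadratic
    by (simp add: complex_eq_iff power2_eq_square algebra_simps)
  moreover have "R = D * (R div D) + M" unfolding M_def by simp
  ultimately have "poly (map_poly complex_of_real M) \<alpha> = 0"
    using root by (metis add_0 map_poly_of_real_add map_poly_of_real_mult mult_zero_left poly_add poly_mult)
  then have "of_real (coeff M 0) + of_real (coeff M 1) * \<alpha> = 0"
    by (subst (asm) M_lin) (simp add: map_poly_pCons mult.commute)
  then have "coeff M 1 = 0" and "coeff M 0 = 0" using nonreal by (auto simp: complex_eq_iff)
  with M_lin have "R mod D = 0" unfolding M_def by simp
  then show ?thesis unfolding D_def by (simp add: mod_eq_0_iff_dvd)
qed

lemma norm_poly_of_real_lower_bound:
  fixes \<xi> :: "'k::real_normed_field" and R :: "real poly"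
  assumes quad_bound: "\<And>s T. T \<ge> 0 \<Longrightarrow> m \<le> norm ((\<xi> - of_real s) ^ 2 + of_real T)" and "m \<ge> 0"
    and "lead_coeff R = 1" and "\<forall>x. poly R x \<noteq> 0"
  shows "m ^ (degree R div 2) \<le> norm (poly (map_poly of_real R) \<xi>)"
  using assms(3,4)
proof (induction "degree R" arbitrary: R rule: less_induct)
  case less
  show ?case
  proof (cases "degree R = 0")
    case True
    then have "R = 1" using less.prems(1) by (metis degree_eq_zeroE lead_coeff_pCons(2) one_pCons pCons_0_0)
    then show ?thesis by simp
  next
    case False
    then have "\<not> constant (poly (map_poly complex_of_real R))"
      by (simp add: constant_degree degree_map_poly)
    then obtain \<alpha> where \<alpha>: "poly (map_poly complex_of_real R) \<alpha> = 0"
      using fundamental_theorem_of_algebra by blast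
    have "Im \<alpha> \<noteq> 0"
    proof
      assume "Im \<alpha> = 0"
      then have "\<alpha> = of_real (Re \<alpha>)" by (simp add: complex_eq_iff)
      then show False using \<alpha> less.prems(2) by (metis of_real_eq_0_iff poly_map_poly_of_real)
    qed
    define D :: "real poly" where "D = [:Re \<alpha> ^ 2 + Im \<alpha> ^ 2, -2 * Re \<alpha>, 1:]"
    define S where "S = R div D"
    have R_eq: "R = D * S"
      using real_poly_nonreal_root_quadratic_dvd[OF \<alpha> \<open>Im \<alpha> \<noteq> 0\<close>] unfolding D_def S_def
      by (simp only: dvd_mult_div_cancel)
    have "D \<noteq> 0" "degree D = 2" "lead_coeff D = 1" unfolding D_def by auto
    moreover have "S \<noteq> 0" using R_eq less.prems(1) by auto
    ultimately have deg: "degree R = degree S + 2" and "lead_coeff S = 1"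
      using R_eq less.prems(1) lead_coeff_mult[of D S] by (auto simp: degree_mult_eq)
    moreover have "\<forall>x. poly S x \<noteq> 0" using less.prems(2) R_eq by auto
    ultimately have IH: "m ^ (degree S div 2) \<le> norm (poly (map_poly of_real S) \<xi>)"
      using less.hyps by simp
    have "poly (map_poly of_real D) \<xi> = (\<xi> - of_real (Re \<alpha>)) ^ 2 + of_real (Im \<alpha> ^ 2)"
      unfolding D_def poly_map_poly_of_real_monic_quadratic by (simp add: power2_eq_square algebra_simps)
    then have D_bound: "m \<le> norm (poly (map_poly of_real D) \<xi>)" using quad_bound[of "Im \<alpha> ^ 2"] by simp
    have "m ^ (degree R div 2) = m * m ^ (degree S div 2)" using deg by simp
    also have "\<dots> \<le> norm (poly (map_poly of_real D) \<xi>) * norm (poly (map_poly of_real S) \<xi>)"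
      by (intro mult_mono D_bound IH) (auto simp: \<open>m \<ge> 0\<close>)
    also have "\<dots> = norm (poly (map_poly of_real R) \<xi>)"
      using R_eq by (simp add: map_poly_of_real_mult norm_mult)
    finally show ?thesis .
  qed
qed

lemma quadratic_odd_power_diff_factor:
  fixes r t \<delta> :: real
  assumes "t \<ge> 0" and "\<delta> > 0"
  defines "P \<equiv> [:r ^ 2 + t, -2 * r, 1:]"
  obtains Rest where "P ^ (2 * k + 1) - [:-\<delta>:] ^ (2 * k + 1) = (P - [:-\<delta>:]) * Rest"
    and "lead_coeff Rest = 1" and "degree Rest = 4 * k" and "\<forall>x. poly Rest x \<noteq> 0"
proof -
  define n where "n = 2 * k + 1"
  define Q where "Q = P - [:-\<delta>:]"
  define Rest where "Rest = (\<Sum>i<n. [:-\<delta>:] ^ (n - Suc i) * P ^ i)"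
  have factor: "P ^ n - [:-\<delta>:] ^ n = Q * Rest"
    unfolding Rest_def Q_def by (rule power_diff_sumr2)
  have "P \<noteq> 0" "degree P = 2" "lead_coeff P = 1" unfolding P_def by auto
  then have "degree (P ^ n) = 2 * n" and "lead_coeff (P ^ n) = 1"
    by (simp add: degree_power_eq, simp add: lead_coeff_power)
  moreover have "degree (- ([:-\<delta>:] ^ n)) < degree (P ^ n)"
    unfolding const_poly_power using \<open>degree (P ^ n) = 2 * n\<close> n_def by simp
  ultimately have lc_lhs: "lead_coeff (P ^ n - [:-\<delta>:] ^ n) = 1"
    and deg_lhs: "degree (P ^ n - [:-\<delta>:] ^ n) = 2 * n"
    using lead_coeff_add_le[of "- ([:-\<delta>:] ^ n)" "P ^ n"] degree_add_eq_left[of "- ([:-\<delta>:] ^ n)" "P ^ n"]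
    by (simp_all add: add.commute)
  have Q_eq: "Q = [:r ^ 2 + (t + \<delta>), -2 * r, 1:]" unfolding Q_def P_def by simp
  then have "Q \<noteq> 0" "degree Q = 2" "lead_coeff Q = 1" by auto
  have "Rest \<noteq> 0" using factor lc_lhs by auto
  have "lead_coeff Rest = 1" using factor lc_lhs \<open>lead_coeff Q = 1\<close> by (simp add: lead_coeff_mult)
  moreover have "degree Rest = 4 * k"
    using factor deg_lhs \<open>degree Q = 2\<close> \<open>Q \<noteq> 0\<close> \<open>Rest \<noteq> 0\<close> n_def by (simp add: degree_mult_eq)
  moreover have "poly Rest x \<noteq> 0" for x
  proof -
    have "poly P x = (x - r) ^ 2 + t" unfolding P_def by (simp add: power2_eq_square algebra_simps)
    then have "poly P x \<ge> 0" using \<open>t \<ge> 0\<close> by simp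
    moreover have "(-\<delta>) ^ n < 0" unfolding n_def using \<open>\<delta> > 0\<close> by (simp add: power_odd_eq)
    ultimately have "poly P x ^ n - (-\<delta>) ^ n \<noteq> 0" by (smt (verit) zero_le_power)
    moreover have "poly P x ^ n - (-\<delta>) ^ n = poly Q x * poly Rest x"
      using arg_cong[OF factor, of "\<lambda>p. poly p x"] by (simp add: const_poly_power)
    ultimately show "poly Rest x \<noteq> 0" by auto
  qed
  ultimately show thesis using that factor unfolding Q_def n_def by blast
qed

text \<open>Mazur's estimate: with \<open>n = 2k + 1\<close>, the quadratic \<open>Q = P + \<delta>\<close> divides \<open>P\<^sup>n - (-\<delta>)\<^sup>n\<close>, and the cofactor,
  having no real roots, is at least \<open>m\<^sup>2\<^sup>k\<close> at \<open>\<xi>\<close>.\<close>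
lemma norm_quadratic_shift_power_bound:
  fixes \<xi> :: "'k::real_normed_field"
  assumes quad_bound: "\<And>s T. T \<ge> 0 \<Longrightarrow> m \<le> norm ((\<xi> - of_real s) ^ 2 + of_real T)" and "m \<ge> 0"
    and "t \<ge> 0" and "\<delta> > 0"
  shows "norm ((\<xi> - of_real r) ^ 2 + of_real (t + \<delta>)) * m ^ (2 * k)
           \<le> norm ((\<xi> - of_real r) ^ 2 + of_real t) ^ (2 * k + 1) + \<delta> ^ (2 * k + 1)"
proof -
  define n where "n = 2 * k + 1"
  define P :: "real poly" where "P = [:r ^ 2 + t, -2 * r, 1:]"
  obtain Rest where factor: "P ^ n - [:-\<delta>:] ^ n = (P - [:-\<delta>:]) * Rest"
    and "lead_coeff Rest = 1" "degree Rest = 4 * k" "\<forall>x. poly Rest x \<noteq> 0"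
    using quadratic_odd_power_diff_factor[OF \<open>t \<ge> 0\<close> \<open>\<delta> > 0\<close>] unfolding P_def n_def by blast
  then have Rest_bound: "m ^ (2 * k) \<le> norm (poly (map_poly of_real Rest) \<xi>)"
    using norm_poly_of_real_lower_bound[OF quad_bound \<open>m \<ge> 0\<close>, of Rest] by simp
  have P_at: "poly (map_poly of_real P) \<xi> = (\<xi> - of_real r) ^ 2 + of_real t"
    unfolding P_def poly_map_poly_of_real_monic_quadratic by (simp add: power2_eq_square algebra_simps)
  have Q_eq: "P - [:-\<delta>:] = [:r ^ 2 + (t + \<delta>), -2 * r, 1:]" unfolding P_def by simp
  have Q_at: "poly (map_poly of_real (P - [:-\<delta>:])) \<xi> = (\<xi> - of_real r) ^ 2 + of_real (t + \<delta>)"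
    unfolding Q_eq poly_map_poly_of_real_monic_quadratic by (simp add: power2_eq_square algebra_simps)
  have factor_at: "poly (map_poly of_real P) \<xi> ^ n - (of_real (-\<delta>)) ^ n
      = poly (map_poly of_real (P - [:-\<delta>:])) \<xi> * poly (map_poly of_real Rest) \<xi>"
    using arg_cong[OF factor, of "\<lambda>p. poly (map_poly (of_real :: real \<Rightarrow> 'k) p) \<xi>"]
    by (simp add: map_poly_of_real_diff map_poly_of_real_mult map_poly_of_real_power const_poly_power
        map_poly_pCons)
  have "norm (poly (map_poly of_real (P - [:-\<delta>:])) \<xi>) * m ^ (2 * k)
      \<le> norm (poly (map_poly of_real (P - [:-\<delta>:])) \<xi>) * norm (poly (map_poly of_real Rest) \<xi>)"
    by (intro mult_left_mono Rest_bound) simp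
  also have "\<dots> = norm (poly (map_poly of_real P) \<xi> ^ n - (of_real (-\<delta>)) ^ n)"
    by (simp only: factor_at norm_mult)
  also have "\<dots> \<le> norm (poly (map_poly of_real P) \<xi>) ^ n + \<delta> ^ n"
    using norm_triangle_ineq4[of "poly (map_poly of_real P) \<xi> ^ n" "(of_real (-\<delta>)) ^ n"] \<open>\<delta> > 0\<close>
    by (simp add: norm_power)
  finally show ?thesis unfolding P_at Q_at n_def .
qed

lemma norm_quadratic_shift_le_min:
  fixes \<xi> :: "'k::real_normed_field"
  assumes quad_bound: "\<And>s T. T \<ge> 0 \<Longrightarrow> m \<le> norm ((\<xi> - of_real s) ^ 2 + of_real T)"
    and "norm ((\<xi> - of_real s0) ^ 2 + of_real T0) = m" and "T0 \<ge> 0"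
    and "0 < \<delta>" "\<delta> < m"
  shows "norm ((\<xi> - of_real s0) ^ 2 + of_real (T0 + \<delta>)) \<le> m"
proof -
  let ?q = "norm ((\<xi> - of_real s0) ^ 2 + of_real (T0 + \<delta>))"
  have "?q \<le> m + \<delta> * ((\<delta> / m) ^ 2) ^ k" for k
  proof -
    have "?q * m ^ (2 * k) \<le> m ^ (2 * k + 1) + \<delta> ^ (2 * k + 1)"
      using norm_quadratic_shift_power_bound[OF quad_bound, where r=s0 and t=T0 and \<delta>=\<delta> and k=k] assms
      by simp
    then have "?q \<le> (m ^ (2 * k + 1) + \<delta> ^ (2 * k + 1)) / m ^ (2 * k)"
      using \<open>0 < \<delta>\<close> \<open>\<delta> < m\<close> by (simp add: pos_le_divide_eq)
    also have "\<dots> = m + \<delta> * ((\<delta> / m) ^ 2) ^ k"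
      using \<open>0 < \<delta>\<close> \<open>\<delta> < m\<close> by (simp add: field_simps flip: power_mult)
    finally show ?thesis .
  qed
  moreover have "(\<lambda>k. m + \<delta> * ((\<delta> / m) ^ 2) ^ k) \<longlonglongrightarrow> m + \<delta> * 0"
    using \<open>0 < \<delta>\<close> \<open>\<delta> < m\<close>
    by (intro tendsto_intros LIMSEQ_power_zero) (simp add: power_less_one_iff divide_less_eq)
  ultimately show ?thesis
    using tendsto_lowerbound[of _ "m + \<delta> * 0" sequentially ?q] by (simp add: always_eventually)
qed

lemma norm_quadratic_coercive:
  fixes \<xi> :: "'k::real_normed_field"
  assumes "T \<ge> 0"
  shows "s ^ 2 + T - 2 * \<bar>s\<bar> * norm \<xi> - norm \<xi> ^ 2 \<le> norm ((\<xi> - of_real s) ^ 2 + of_real T)"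
proof -
  have expand: "(\<xi> - of_real s) ^ 2 + of_real T = of_real (s ^ 2 + T) - (of_real (2 * s) * \<xi> - \<xi> ^ 2)"
    by (simp add: power2_eq_square algebra_simps)
  have "norm (of_real (2 * s) * \<xi> - \<xi> ^ 2) \<le> 2 * \<bar>s\<bar> * norm \<xi> + norm \<xi> ^ 2"
    using norm_triangle_ineq4[of "of_real (2 * s) * \<xi>" "\<xi> ^ 2"] by (simp add: norm_mult norm_power)
  moreover have "norm (of_real (s ^ 2 + T) :: 'k) = s ^ 2 + T" using assms by (subst norm_of_real) simp
  ultimately show ?thesis unfolding expand
    using norm_triangle_ineq2[of "of_real (s ^ 2 + T) :: 'k" "of_real (2 * s) * \<xi> - \<xi> ^ 2"] by linarith
qed

lemma norm_quadratic_attains_min: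
  fixes \<xi> :: "'k::real_normed_field"
  shows "\<exists>s0 T0. T0 \<ge> 0 \<and>
           (\<forall>s T. T \<ge> 0 \<longrightarrow> norm ((\<xi> - of_real s0) ^ 2 + of_real T0) \<le> norm ((\<xi> - of_real s) ^ 2 + of_real T))"
proof -
  define f where "f = (\<lambda>p. norm ((\<xi> - of_real (fst p)) ^ 2 + of_real (snd p)))"
  define a where "a = norm \<xi>"
  define R where "R = 3 * a ^ 2 + 3 * a + 3"
  define B where "B = {-R..R} \<times> {0..R}"
  have "a \<ge> 0" unfolding a_def by simp
  then have "R \<ge> 0" unfolding R_def by (intro add_nonneg_nonneg) auto
  then have "(0, 0) \<in> B" unfolding B_def by auto
  moreover have "compact B" unfolding B_def by (intro compact_Times compact_Icc)
  moreover have "continuous_on B f" unfolding f_def by (intro continuous_intros)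
  ultimately obtain p0 where p0: "p0 \<in> B" "\<forall>q\<in>B. f p0 \<le> f q"
    using continuous_attains_inf[of B f] by blast
  have "f (0, 0) = a ^ 2" unfolding f_def a_def by (simp add: norm_power)
  then have "f p0 \<le> a ^ 2" using p0 \<open>(0, 0) \<in> B\<close> by metis
  \<comment> \<open>outside the box, coercivity pushes the value above the value at the origin\<close>
  have "f p0 \<le> f (s, T)" if "T \<ge> 0" for s T
  proof (cases "(s, T) \<in> B")
    case False
    then have "\<bar>s\<bar> > R \<or> T > R" unfolding B_def using \<open>T \<ge> 0\<close> by auto
    moreover have "s ^ 2 - 2 * \<bar>s\<bar> * a = \<bar>s\<bar> * (\<bar>s\<bar> - 2 * a)" by (simp add: power2_eq_square algebra_simps)
    moreover have "s ^ 2 - 2 * \<bar>s\<bar> * a \<ge> - (a ^ 2)"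
      using zero_le_power2[of "\<bar>s\<bar> - a"] by (simp add: power2_eq_square algebra_simps)
    moreover have "\<bar>s\<bar> * (\<bar>s\<bar> - 2 * a) \<ge> \<bar>s\<bar>" if "\<bar>s\<bar> - 2 * a \<ge> 1"
      using mult_left_mono[OF that, of "\<bar>s\<bar>"] by simp
    ultimately have "s ^ 2 + T - 2 * \<bar>s\<bar> * a - a ^ 2 > a ^ 2"
      using \<open>T \<ge> 0\<close> \<open>a \<ge> 0\<close> unfolding R_def by (smt (verit) zero_le_power2)
    then show ?thesis
      using norm_quadratic_coercive[OF \<open>T \<ge> 0\<close>, of s \<xi>] \<open>f p0 \<le> a ^ 2\<close> unfolding f_def a_def by simp
  qed (use p0 in auto)
  moreover obtain s0 T0 where "p0 = (s0, T0)" by fastforce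
  moreover have "T0 \<ge> 0" using p0 \<open>p0 = (s0, T0)\<close> unfolding B_def by auto
  ultimately show ?thesis unfolding f_def by auto
qed

lemma real_quadratic_root:
  fixes \<xi> :: "'k::real_normed_field"
  shows "\<exists>s T. T \<ge> 0 \<and> (\<xi> - of_real s) ^ 2 + of_real T = 0"
proof -
  obtain s0 T0 where "T0 \<ge> 0" and min:
    "\<And>s T. T \<ge> 0 \<Longrightarrow> norm ((\<xi> - of_real s0) ^ 2 + of_real T0) \<le> norm ((\<xi> - of_real s) ^ 2 + of_real T)"
    using norm_quadratic_attains_min[of \<xi>] by blast
  define m where "m = norm ((\<xi> - of_real s0) ^ 2 + of_real T0)"
  show ?thesis
  proof (cases "m = 0")
    case True
    then show ?thesis using \<open>T0 \<ge> 0\<close> unfolding m_def by auto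
  next
    case False
    then have "m > 0" unfolding m_def by simp
    have quad_bound: "m \<le> norm ((\<xi> - of_real s) ^ 2 + of_real T)" if "T \<ge> 0" for s T
      using min[OF that] unfolding m_def .
    \<comment> \<open>the minimum is attained along the whole ray \<open>T0 + j m/2\<close>, contradicting coercivity\<close>
    have on_ray: "norm ((\<xi> - of_real s0) ^ 2 + of_real (T0 + real j * (m / 2))) = m" for j
    proof (induction j)
      case 0
      then show ?case unfolding m_def by simp
    next
      case (Suc j)
      have "T0 + real j * (m / 2) \<ge> 0" using \<open>T0 \<ge> 0\<close> \<open>m > 0\<close> by simp
      then have "norm ((\<xi> - of_real s0) ^ 2 + of_real (T0 + real j * (m / 2) + m / 2)) = m"
        using norm_quadratic_shift_le_min[OF quad_bound Suc, of "m / 2"] quad_bound \<open>m > 0\<close>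
        by (smt (verit, best) field_sum_of_halves)
      moreover have "T0 + real (Suc j) * (m / 2) = T0 + real j * (m / 2) + m / 2"
        by (simp add: algebra_simps)
      ultimately show ?case by (simp only:)
    qed
    obtain j :: nat where "real j > (m + 2 * \<bar>s0\<bar> * norm \<xi> + norm \<xi> ^ 2) / (m / 2)"
      using reals_Archimedean2 by blast
    then have "real j * (m / 2) > m + 2 * \<bar>s0\<bar> * norm \<xi> + norm \<xi> ^ 2"
      using \<open>m > 0\<close> by (simp add: field_simps)
    moreover have "T0 + real j * (m / 2) \<ge> 0" using \<open>T0 \<ge> 0\<close> \<open>m > 0\<close> by simp
    ultimately show ?thesis
      using norm_quadratic_coercive[of "T0 + real j * (m / 2)" s0 \<xi>] on_ray[of j] \<open>T0 \<ge> 0\<close>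
      by (smt (verit) zero_le_power2)
  qed
qed

lemma norm_of_real_add_sqrt_minus_one:
  fixes j :: "'k::real_normed_field"
  assumes j: "j ^ 2 = -1"
  shows "\<bar>a\<bar> + \<bar>b\<bar> \<le> 2 * norm (of_real a + of_real b * j)"
proof -
  let ?z = "of_real a + of_real b * j :: 'k"
  have "norm j ^ 2 = 1" using j by (metis norm_minus_cancel norm_one norm_power)
  then have "norm j = 1" using norm_ge_zero[of j] by (auto simp: power2_eq_1_iff)
  have "?z * (of_real a - of_real b * j) = of_real a ^ 2 - of_real b ^ 2 * j ^ 2"
    by (simp add: power2_eq_square algebra_simps)
  also have "\<dots> = of_real (a ^ 2 + b ^ 2)" using j by simp
  finally have "?z * (of_real a - of_real b * j) = of_real (a ^ 2 + b ^ 2)" .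
  then have "norm ?z * norm (of_real a - of_real b * j :: 'k) = norm (of_real (a ^ 2 + b ^ 2) :: 'k)"
    by (simp only: norm_mult[symmetric])
  also have "\<dots> = a ^ 2 + b ^ 2" by (subst norm_of_real) simp
  finally have "a ^ 2 + b ^ 2 = norm ?z * norm (of_real a - of_real b * j :: 'k)" ..
  also have "\<dots> \<le> norm ?z * (\<bar>a\<bar> + \<bar>b\<bar>)"
    using norm_triangle_ineq4[of "of_real a :: 'k" "of_real b * j"] \<open>norm j = 1\<close>
    by (intro mult_left_mono) (auto simp: norm_mult)
  finally have "a ^ 2 + b ^ 2 \<le> norm ?z * (\<bar>a\<bar> + \<bar>b\<bar>)" .
  moreover have "(\<bar>a\<bar> + \<bar>b\<bar>) ^ 2 \<le> 2 * (a ^ 2 + b ^ 2)"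
    using zero_le_power2[of "\<bar>a\<bar> - \<bar>b\<bar>"] by (simp add: power2_eq_square algebra_simps)
  ultimately have "(\<bar>a\<bar> + \<bar>b\<bar>) * (\<bar>a\<bar> + \<bar>b\<bar>) \<le> (2 * norm ?z) * (\<bar>a\<bar> + \<bar>b\<bar>)"
    by (simp add: power2_eq_square)
  moreover have "\<bar>a\<bar> + \<bar>b\<bar> > 0 \<or> (a = 0 \<and> b = 0)" by auto
  ultimately show ?thesis by (auto dest: mult_right_le_imp_le)
qed

lemma real_normed_field_real_or_sqrt_minus_one:
  fixes z :: "'k::real_normed_field"
  obtains s where "z = of_real s"
  | s t u where "u ^ 2 = -1" "z = of_real s + of_real t * u"
proof -
  obtain s T where "T \<ge> 0" and root: "(z - of_real s) ^ 2 + of_real T = 0"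
    using real_quadratic_root by blast
  show thesis
  proof (cases "T = 0")
    case True
    then show thesis using root that(1)[of s] by simp
  next
    case False
    define u where "u = (z - of_real s) / of_real (sqrt T)"
    have "u ^ 2 = (z - of_real s) ^ 2 / of_real T"
      unfolding u_def using \<open>T \<ge> 0\<close> by (simp add: power_divide flip: of_real_power)
    also have "\<dots> = -1" using root False by (simp add: eq_neg_iff_add_eq_0[symmetric])
    finally show thesis using that(2)[of u s "sqrt T"] False \<open>T \<ge> 0\<close> unfolding u_def by simp
  qed
qed

lemma real_normed_field_real_span2:
  "\<exists>j::'k::real_normed_field. \<forall>z. \<exists>a b. z = of_real a + of_real b * j \<and> \<bar>a\<bar> + \<bar>b\<bar> \<le> 2 * norm z"
proof (cases "\<exists>j::'k. j ^ 2 = -1")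
  case True
  then obtain j :: 'k where j: "j ^ 2 = -1" by blast
  have "\<exists>a b. z = of_real a + of_real b * j" for z
  proof (cases z rule: real_normed_field_real_or_sqrt_minus_one)
    case (1 s)
    then show ?thesis by (intro exI[of _ s] exI[of _ 0]) simp
  next
    case (2 s t u)
    then have "(u - j) * (u + j) = 0" using j by (simp add: power2_eq_square algebra_simps)
    then have "u = j \<or> u = -j" by (simp add: eq_neg_iff_add_eq_0)
    then show ?thesis using 2 by (metis mult_minus_left mult_minus_right of_real_minus)
  qed
  then show ?thesis using norm_of_real_add_sqrt_minus_one[OF j] by metis
next
  case False
  have "\<exists>a b. z = of_real a + of_real b * 0 \<and> \<bar>a\<bar> + \<bar>b\<bar> \<le> 2 * norm z" for z :: 'k
  proof -
    obtain a where "z = of_real a"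
      using False by (cases z rule: real_normed_field_real_or_sqrt_minus_one) auto
    then show ?thesis by (intro exI[of _ a] exI[of _ 0]) simp
  qed
  then show ?thesis by blast
qed

lemma compact_cball_real_normed_field: "compact (cball (0::'k::real_normed_field) R)"
proof -
  obtain j :: 'k where j: "\<forall>z. \<exists>a b. z = of_real a + of_real b * j \<and> \<bar>a\<bar> + \<bar>b\<bar> \<le> 2 * norm z"
    using real_normed_field_real_span2 by blast
  define h where "h = (\<lambda>p::real \<times> real. of_real (fst p) + of_real (snd p) * j)"
  define B where "B = {-2 * R..2 * R} \<times> {-2 * R..2 * R}"
  have "compact (h ` B)" unfolding B_def h_def
    by (intro compact_continuous_image compact_Times compact_Icc continuous_intros)
  moreover have "cball 0 R \<subseteq> h ` B"
  proof
    fix z :: 'k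
    assume "z \<in> cball 0 R"
    moreover obtain a b where "z = of_real a + of_real b * j" "\<bar>a\<bar> + \<bar>b\<bar> \<le> 2 * norm z" using j by blast
    ultimately show "z \<in> h ` B" unfolding h_def B_def by (intro image_eqI[of _ _ "(a, b)"]) auto
  qed
  ultimately show ?thesis by (metis closed_cball compact_Int_closed inf.absorb_iff2)
qed

lemma Cauchy_convergent_real_normed_field:
  fixes f :: "nat \<Rightarrow> 'k::real_normed_field"
  assumes "Cauchy f"
  shows "convergent f"
proof -
  obtain R where "\<forall>n. f n \<in> cball 0 R"
    using cauchy_imp_bounded[OF assms] unfolding bounded_iff by auto
  moreover have "complete (cball (0::'k) R)" by (rule compact_imp_complete[OF compact_cball_real_normed_field])
  ultimately show ?thesis using assms unfolding complete_def convergent_def by blast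
qed

lemma real_normed_field_countable_dense:
  "\<exists>Q::'k::real_normed_field set. countable Q \<and> (\<forall>z. \<forall>e>0. \<exists>q\<in>Q. norm (z - q) < e)"
proof -
  obtain j :: 'k where j: "\<forall>z. \<exists>a b. z = of_real a + of_real b * j \<and> \<bar>a\<bar> + \<bar>b\<bar> \<le> 2 * norm z"
    using real_normed_field_real_span2 by blast
  define Q where "Q = (\<lambda>(p, q). of_real p + of_real q * j) ` (\<rat> \<times> \<rat>)"
  have "countable Q" unfolding Q_def using countable_rat by blast
  moreover have "\<exists>q\<in>Q. norm (z - q) < e" if "e > 0" for z e
  proof -
    obtain a b where z: "z = of_real a + of_real b * j" using j by metis
    define \<delta> where "\<delta> = e / (1 + norm j)"
    have "1 + norm j > 0" by (simp add: add_pos_nonneg)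
    then have "\<delta> > 0" unfolding \<delta>_def using \<open>e > 0\<close> by simp
    obtain p where "p \<in> \<rat>" "a - \<delta> < p" "p < a + \<delta>"
      using Rats_dense_in_real[of "a - \<delta>" "a + \<delta>"] \<open>\<delta> > 0\<close> by auto
    moreover obtain q where "q \<in> \<rat>" "b - \<delta> < q" "q < b + \<delta>"
      using Rats_dense_in_real[of "b - \<delta>" "b + \<delta>"] \<open>\<delta> > 0\<close> by auto
    ultimately have "\<bar>a - p\<bar> < \<delta>" "\<bar>b - q\<bar> < \<delta>" by linarith+
    have "z - (of_real p + of_real q * j) = of_real (a - p) + of_real (b - q) * j"
      unfolding z by (simp add: algebra_simps)
    then have "norm (z - (of_real p + of_real q * j)) = norm (of_real (a - p) + of_real (b - q) * j)"
      by (simp only:)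
    also have "\<dots> \<le> norm (of_real (a - p) :: 'k) + norm (of_real (b - q) * j)"
      by (rule norm_triangle_ineq)
    also have "\<dots> = \<bar>a - p\<bar> + \<bar>b - q\<bar> * norm j" by (simp only: norm_mult norm_of_real)
    also have "\<dots> < \<delta> + \<delta> * norm j"
      using \<open>\<bar>a - p\<bar> < \<delta>\<close> \<open>\<bar>b - q\<bar> < \<delta>\<close> by (intro add_less_le_mono mult_right_mono) auto
    also have "\<dots> = \<delta> * (1 + norm j)" by (simp add: algebra_simps)
    also have "\<dots> = e" unfolding \<delta>_def using \<open>1 + norm j > 0\<close> by simp
    finally have "norm (z - (of_real p + of_real q * j)) < e" .
    moreover have "of_real p + of_real q * j \<in> Q"
      unfolding Q_def using \<open>p \<in> \<rat>\<close> \<open>q \<in> \<rat>\<close> by (intro image_eqI[of _ _ "(p, q)"]) auto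
    ultimately show ?thesis by blast
  qed
  ultimately show ?thesis by blast
qed

section \<open>Ultrafilters\<close>

definition ultrafilter :: "'a filter \<Rightarrow> bool" where
  "ultrafilter F \<longleftrightarrow> F \<noteq> bot \<and> (\<forall>P. eventually P F \<or> eventually (\<lambda>x. \<not> P x) F)"

definition finite_inter_property :: "'a set set \<Rightarrow> bool" where
  "finite_inter_property A \<longleftrightarrow> (\<forall>G. finite G \<and> G \<subseteq> A \<longrightarrow> \<Inter>G \<noteq> {})"

lemma finite_inter_propertyI:
  "(\<And>G. finite G \<Longrightarrow> G \<subseteq> A \<Longrightarrow> \<Inter>G \<noteq> {}) \<Longrightarrow> finite_inter_property A"
  unfolding finite_inter_property_def by blast

lemma finite_inter_propertyD:
  "finite_inter_property A \<Longrightarrow> finite G \<Longrightarrow> G \<subseteq> A \<Longrightarrow> \<Inter>G \<noteq> {}"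
  unfolding finite_inter_property_def by blast

lemma eventually_Inf_principal:
  "eventually P (Inf (principal ` M)) \<longleftrightarrow> (\<exists>G\<subseteq>M. finite G \<and> (\<forall>x\<in>\<Inter>G. P x))"
proof -
  have "eventually P (Inf (principal ` G)) \<longleftrightarrow> (\<forall>x\<in>\<Inter>G. P x)" if "finite G" for G :: "'a set set"
    using INF_principal_finite[OF that, of "\<lambda>A. A"] by (simp add: eventually_principal)
  then show ?thesis unfolding eventually_INF[of P principal M] by blast
qed

lemma maximal_finite_inter_property_complement:
  assumes "finite_inter_property M"
    and maximal: "\<And>A. finite_inter_property (insert A M) \<Longrightarrow> A \<in> M"
  shows "A \<in> M \<or> - A \<in> M"
proof (cases "finite_inter_property (insert A M)")
  case False
  then obtain G' where G': "finite G'" "G' \<subseteq> insert A M" "\<Inter>G' = {}"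
    unfolding finite_inter_property_def by blast
  define G where "G = G' - {A}"
  have G: "finite G" "G \<subseteq> M" using G' unfolding G_def by auto
  have "\<Inter>(insert A G) \<subseteq> \<Inter>G'" using G'(2) unfolding G_def by (intro Inter_anti_mono) blast
  then have "A \<inter> \<Inter>G = {}" using G'(3) by simp
  then have disjoint: "x \<notin> A" if "x \<in> \<Inter>G" for x using that by blast
  \<comment> \<open>every finite subfamily of \<open>M\<close>, together with \<open>G\<close>, meets inside \<open>- A\<close>\<close>
  have "finite_inter_property (insert (- A) M)"
  proof (rule finite_inter_propertyI)
    fix H assume "finite H" "H \<subseteq> insert (- A) M"
    then have "finite (H - {- A} \<union> G)" and "H - {- A} \<union> G \<subseteq> M" using G by auto
    then have "\<Inter>(H - {- A} \<union> G) \<noteq> {}" by (rule finite_inter_propertyD[OF assms(1)])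
    then obtain x where x: "x \<in> \<Inter>(H - {- A} \<union> G)" by blast
    then have "x \<in> - A" using disjoint by simp
    with x have "x \<in> \<Inter>H" by blast
    then show "\<Inter>H \<noteq> {}" by blast
  qed
  then show ?thesis using maximal by blast
qed (use maximal in blast)

lemma finite_inter_property_maximal_extension:
  assumes "finite_inter_property A0"
  shows "\<exists>M. A0 \<subseteq> M \<and> finite_inter_property M \<and> (\<forall>A. finite_inter_property (insert A M) \<longrightarrow> A \<in> M)"
proof -
  define Fams where "Fams = {M. A0 \<subseteq> M \<and> finite_inter_property M}"
  have chain_bound: "\<exists>U\<in>Fams. \<forall>M\<in>C. M \<subseteq> U" if C: "C \<in> chains Fams" for C
  proof (cases "C = {}")
    case True
    then show ?thesis using assms unfolding Fams_def by auto
  next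
    case False
    have "finite_inter_property (\<Union>C)"
    proof (rule finite_inter_propertyI)
      fix G assume "finite G" "G \<subseteq> \<Union>C"
      moreover have "subset.chain Fams C" using C by (simp add: chains_alt_def)
      ultimately obtain B where "B \<in> C" "G \<subseteq> B"
        using finite_subset_Union_chain[of G C] False by blast
      moreover have "finite_inter_property B" using \<open>B \<in> C\<close> C unfolding chains_def Fams_def by blast
      ultimately show "\<Inter>G \<noteq> {}" using finite_inter_propertyD \<open>finite G\<close> by blast
    qed
    moreover have "A0 \<subseteq> \<Union>C" using C False unfolding chains_def Fams_def by blast
    ultimately show ?thesis unfolding Fams_def by blast
  qed
  have "\<exists>M\<in>Fams. \<forall>M'\<in>Fams. M \<subseteq> M' \<longrightarrow> M' = M"
    by (rule Zorn_Lemma2) (use chain_bound in blast)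
  then obtain M where "M \<in> Fams" and maximal: "\<And>M'. M' \<in> Fams \<Longrightarrow> M \<subseteq> M' \<Longrightarrow> M' = M"
    by blast
  then have "A0 \<subseteq> M" and "finite_inter_property M" unfolding Fams_def by auto
  moreover have "A \<in> M" if "finite_inter_property (insert A M)" for A
    using maximal[of "insert A M"] that \<open>A0 \<subseteq> M\<close> unfolding Fams_def by blast
  ultimately show ?thesis by blast
qed

lemma ultrafilter_exists_le:
  fixes F :: "'a filter"
  assumes "F \<noteq> bot"
  shows "\<exists>U. ultrafilter U \<and> U \<le> F"
proof -
  define A0 where "A0 = {{x. P x} | P. eventually P F}"
  have "finite_inter_property A0"
  proof (rule finite_inter_propertyI)
    fix G assume "finite G" "G \<subseteq> A0"
    then have "eventually (\<lambda>x. \<forall>A\<in>G. x \<in> A) F"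
      by (intro eventually_ball_finite) (auto simp: A0_def)
    then show "\<Inter>G \<noteq> {}" using eventually_happens[of _ F] assms by blast
  qed
  then obtain M where "A0 \<subseteq> M" and fip: "finite_inter_property M"
    and maximal: "\<forall>A. finite_inter_property (insert A M) \<longrightarrow> A \<in> M"
    using finite_inter_property_maximal_extension by blast
  have complement: "A \<in> M \<or> - A \<in> M" for A
    using maximal_finite_inter_property_complement[OF fip] maximal by blast
  define U where "U = Inf (principal ` M)"
  have in_M: "eventually (\<lambda>x. x \<in> A) U" if "A \<in> M" for A
    unfolding U_def eventually_Inf_principal using that by (intro exI[of _ "{A}"]) auto
  have "\<exists>x. x \<in> \<Inter>G" if "finite G" "G \<subseteq> M" for G
    using finite_inter_propertyD[OF fip that] by blast
  then have "U \<noteq> bot" unfolding U_def trivial_limit_def eventually_Inf_principal by auto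
  moreover have "eventually P U \<or> eventually (\<lambda>x. \<not> P x) U" for P
    using complement[of "{x. P x}"] in_M[of "{x. P x}"] in_M[of "- {x. P x}"] by auto
  moreover have "U \<le> F"
  proof (rule filter_leI)
    fix P assume "eventually P F"
    then show "eventually P U" using in_M[of "{x. P x}"] \<open>A0 \<subseteq> M\<close> unfolding A0_def by auto
  qed
  ultimately show ?thesis unfolding ultrafilter_def by auto
qed

lemma ultrafilter_compact_tendsto:
  fixes x :: "'b \<Rightarrow> 'c::t2_space"
  assumes "ultrafilter F" and "compact S" and "eventually (\<lambda>n. x n \<in> S) F"
  shows "\<exists>L\<in>S. (x \<longlongrightarrow> L) F"
proof -
  have "filtermap x F \<noteq> bot" using assms(1) by (simp add: filtermap_bot_iff ultrafilter_def)
  moreover have "eventually (\<lambda>y. y \<in> S) (filtermap x F)" using assms(3) by (simp add: eventually_filtermap)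
  ultimately obtain L where L: "L \<in> S" "inf (nhds L) (filtermap x F) \<noteq> bot"
    using \<open>compact S\<close> unfolding compact_filter by blast
  \<comment> \<open>a cluster point of an ultrafilter is a limit\<close>
  have "(x \<longlongrightarrow> L) F"
  proof (rule topological_tendstoI)
    fix T assume T: "open T" "L \<in> T"
    show "eventually (\<lambda>n. x n \<in> T) F"
    proof (rule ccontr)
      assume "\<not> eventually (\<lambda>n. x n \<in> T) F"
      then have "eventually (\<lambda>n. x n \<notin> T) F" using assms(1) unfolding ultrafilter_def by blast
      then have "eventually (\<lambda>y. y \<notin> T) (filtermap x F)" by (simp add: eventually_filtermap)
      moreover have "eventually (\<lambda>y. y \<in> T) (nhds L)" using T by (rule eventually_nhds_in_open)
      ultimately have "eventually (\<lambda>y. False) (inf (nhds L) (filtermap x F))"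
        unfolding eventually_inf by blast
      then show False using L(2) by (simp add: eventually_False)
    qed
  qed
  then show ?thesis using L by blast
qed

section \<open>Limits along ultrafilters in reflexive spaces\<close>

lemma dual_set_bound:
  fixes scl :: "'k::real_normed_field \<Rightarrow> 'a::ab_group_add \<Rightarrow> 'a"
  assumes ban: "banach_on scl X N" and \<phi>: "\<phi> \<in> dual_set scl X N" and "y \<in> X"
  shows "norm (\<phi> y) \<le> dual_norm X N \<phi> * N y" and "dual_norm X N \<phi> \<ge> 0"
proof -
  have sub: "subspace_on scl X" and nrm: "norm_on scl X N" using ban unfolding banach_on_def by auto
  have lin: "lin_fun scl X \<phi>" and "bounded_fun X N \<phi>" using \<phi> unfolding dual_set_def by auto
  then obtain C where C: "\<forall>x\<in>X. norm (\<phi> x) \<le> C * N x" unfolding bounded_fun_def by blast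
  define S where "S = {norm (\<phi> x) | x. x \<in> X \<and> N x \<le> 1}"
  have dn: "dual_norm X N \<phi> = Sup S" unfolding dual_norm_def S_def by simp
  have "bdd_above S"
  proof (rule bdd_aboveI)
    fix z assume "z \<in> S"
    then obtain x where x: "z = norm (\<phi> x)" "x \<in> X" "N x \<le> 1" unfolding S_def by blast
    have "N x \<ge> 0" using nrm x unfolding norm_on_def by blast
    then have "C * N x \<le> max C 0" using x(3)
      by (cases "C \<ge> 0") (auto intro: mult_left_le mult_nonpos_nonneg order.trans[of _ 0])
    then show "z \<le> max C 0" using C x by force
  qed
  have "0 \<in> X" using sub unfolding subspace_on_def by blast
  then have "\<phi> 0 = 0" using lin unfolding lin_fun_def by (metis add_0 add_cancel_right_right)
  then have "0 \<in> S" unfolding S_def using \<open>0 \<in> X\<close> nrm unfolding norm_on_def by force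
  then show "dual_norm X N \<phi> \<ge> 0" using \<open>bdd_above S\<close> dn by (metis cSup_upper)
  show "norm (\<phi> y) \<le> dual_norm X N \<phi> * N y"
  proof (cases "N y = 0")
    case True
    then have "y = 0" using nrm \<open>y \<in> X\<close> unfolding norm_on_def by blast
    then show ?thesis using True \<open>\<phi> 0 = 0\<close> by simp
  next
    case False
    then have "N y > 0" using nrm \<open>y \<in> X\<close> unfolding norm_on_def by force
    define y' where "y' = scl (of_real (1 / N y)) y"
    have "y' \<in> X" using sub \<open>y \<in> X\<close> unfolding subspace_on_def y'_def by blast
    have "N y' = norm (of_real (1 / N y) :: 'k) * N y" using nrm \<open>y \<in> X\<close> unfolding norm_on_def y'_def by blast
    then have "N y' = 1" using \<open>N y > 0\<close> by (simp add: norm_divide)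
    have "\<phi> y' = of_real (1 / N y) * \<phi> y" using lin \<open>y \<in> X\<close> unfolding lin_fun_def y'_def by blast
    then have "norm (\<phi> y) / N y = norm (\<phi> y')" using \<open>N y > 0\<close> by (simp add: norm_mult norm_divide)
    also have "\<dots> \<le> Sup S"
      using \<open>bdd_above S\<close> \<open>y' \<in> X\<close> \<open>N y' = 1\<close> by (intro cSup_upper) (auto simp: S_def)
    finally show ?thesis using \<open>N y > 0\<close> dn by (simp add: divide_le_eq)
  qed
qed

lemma reflexive_ultrafilter_weak_limit:
  fixes scl :: "'k::real_normed_field \<Rightarrow> 'a::ab_group_add \<Rightarrow> 'a" and r :: "'b \<Rightarrow> 'a"
  assumes ban: "banach_on scl X N" and refl: "reflexive_on scl X N"
    and r: "\<And>n. r n \<in> X" and bounded: "\<And>n. N (r n) \<le> C" and "ultrafilter F"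
  shows "\<exists>x\<in>X. \<forall>\<phi>\<in>dual_set scl X N. ((\<lambda>n. \<phi> (r n)) \<longlongrightarrow> \<phi> x) F"
proof -
  have "F \<noteq> bot" using \<open>ultrafilter F\<close> unfolding ultrafilter_def by blast
  have lim: "\<exists>L. ((\<lambda>n. \<phi> (r n)) \<longlongrightarrow> L) F \<and> norm L \<le> dual_norm X N \<phi> * C"
    if \<phi>: "\<phi> \<in> dual_set scl X N" for \<phi>
  proof -
    have "norm (\<phi> (r n)) \<le> dual_norm X N \<phi> * C" for n
      using dual_set_bound[OF ban \<phi> r] bounded[of n] by (meson mult_left_mono order.trans)
    then have "eventually (\<lambda>n. \<phi> (r n) \<in> cball 0 (dual_norm X N \<phi> * C)) F" by simp
    then show ?thesis
      using ultrafilter_compact_tendsto[OF \<open>ultrafilter F\<close> compact_cball_real_normed_field] by fastforce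
  qed
  define \<Phi> where "\<Phi> = (\<lambda>\<phi>::'a \<Rightarrow> 'k. Lim F (\<lambda>n. \<phi> (r n)))"
  have \<Phi>: "((\<lambda>n. \<phi> (r n)) \<longlongrightarrow> \<Phi> \<phi>) F" "norm (\<Phi> \<phi>) \<le> dual_norm X N \<phi> * C"
    if "\<phi> \<in> dual_set scl X N" for \<phi>
    using lim[OF that] tendsto_Lim[OF \<open>F \<noteq> bot\<close>] unfolding \<Phi>_def by auto
  have "\<exists>x\<in>X. \<forall>\<phi>\<in>dual_set scl X N. \<Phi> \<phi> = \<phi> x"
    using refl unfolding reflexive_on_def
  proof (elim allE impE, intro conjI ballI allI exI)
    fix \<phi> \<psi> assume "\<phi> \<in> dual_set scl X N" "\<psi> \<in> dual_set scl X N"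
    then show "\<Phi> (\<lambda>x. \<phi> x + \<psi> x) = \<Phi> \<phi> + \<Phi> \<psi>"
      using tendsto_Lim[OF \<open>F \<noteq> bot\<close> tendsto_add[OF \<Phi>(1) \<Phi>(1)]] by (simp add: \<Phi>_def)
  next
    fix a \<phi> assume "\<phi> \<in> dual_set scl X N"
    then show "\<Phi> (\<lambda>x. a * \<phi> x) = a * \<Phi> \<phi>"
      using tendsto_Lim[OF \<open>F \<noteq> bot\<close> tendsto_mult_left[OF \<Phi>(1)]] by (simp add: \<Phi>_def)
  next
    fix \<phi> assume "\<phi> \<in> dual_set scl X N"
    then show "norm (\<Phi> \<phi>) \<le> C * dual_norm X N \<phi>" using \<Phi>(2) by (simp add: mult.commute)
  qed
  then show ?thesis using \<Phi>(1) by metis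
qed

section \<open>The coefficient spaces \<open>\<Theta>\<^sub>s\<close>\<close>

lemma norm_of_real_add_nonneg:
  "0 \<le> a \<Longrightarrow> 0 \<le> b \<Longrightarrow> norm (of_real a + of_real b :: 'a::real_normed_algebra_1) = a + b"
  by (simp flip: of_real_add)

lemma Cauchy_subseq_geometric:
  fixes D :: "nat \<Rightarrow> nat \<Rightarrow> real"
  assumes "\<forall>e>0. \<exists>M. \<forall>m\<ge>M. \<forall>n\<ge>M. D m n < e"
  shows "\<exists>\<sigma>. strict_mono \<sigma> \<and> (\<forall>k. \<forall>m\<ge>\<sigma> k. \<forall>n\<ge>\<sigma> k. D m n < (1/2) ^ k)"
proof -
  have "\<forall>k. \<exists>M. \<forall>m\<ge>M. \<forall>n\<ge>M. D m n < (1/2) ^ k" using assms by simp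
  then obtain M where M: "\<forall>k. \<forall>m\<ge>M k. \<forall>n\<ge>M k. D m n < (1/2) ^ k" by metis
  define \<sigma> where "\<sigma> k = (\<Sum>j\<le>k. M j) + k" for k
  have "\<sigma> k \<ge> M k" for k unfolding \<sigma>_def using member_le_sum[of k "{..k}" M] by simp
  moreover have "strict_mono \<sigma>" unfolding strict_mono_Suc_iff \<sigma>_def by simp
  ultimately show ?thesis using M by (meson order.trans)
qed

definition trunc_seq :: "nat \<Rightarrow> (nat \<Rightarrow> 'k::zero) \<Rightarrow> nat \<Rightarrow> 'k" where
  "trunc_seq k c = (\<lambda>i. if i < k then c i else 0)"

lemma sum_unit_seq: "(\<Sum>j<n. seq_scl (a j) (unit_seq j)) = trunc_seq n a"
  by (induction n) (auto simp: trunc_seq_def seq_scl_def unit_seq_def fun_eq_iff less_Suc_eq)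

lemma tail_seq_add_trunc_seq: "(c :: nat \<Rightarrow> 'z::ab_group_add) = (\<lambda>i. tail_seq k c i + trunc_seq k c i)"
  unfolding trunc_seq_def tail_seq_def by (auto simp: fun_eq_iff)

lemma diff_trunc_seq: "(c :: nat \<Rightarrow> 'z::ab_group_add) - trunc_seq n c = tail_seq n c"
  unfolding trunc_seq_def tail_seq_def by (auto simp: fun_eq_iff)

locale coefficient_space =
  fixes scl :: "'k::real_normed_field \<Rightarrow> 'a::ab_group_add \<Rightarrow> 'a"
    and X :: "nat \<Rightarrow> 'a set" and N :: "nat \<Rightarrow> 'a \<Rightarrow> real"
    and g :: "nat \<Rightarrow> 'a \<Rightarrow> 'k"
  assumes vs: "vector_space scl"
    and X_props: "props_iii scl X N"
    and X_refl: "\<forall>s. reflexive_on scl (X s) (N s)"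
    and g_dual: "\<forall>i. g i \<in> dual_set scl (X 0) (N 0)"
    and g_nonzero: "\<forall>i. \<exists>x\<in>X 0. g i x \<noteq> 0"
begin

interpretation vector_space scl by (rule vs)

abbreviation "XF \<equiv> \<Inter>s. X s"
abbreviation "Ms s c \<equiv> Mset X g s c"
abbreviation "Th s \<equiv> Theta X g s"
abbreviation "Tn s \<equiv> Theta_norm X N g s"

lemma banach: "banach_on scl (X s) (N s)"
  using X_props unfolding props_iii_def by blast

lemma zero_in_X: "0 \<in> X s"
  and add_in_X: "x \<in> X s \<Longrightarrow> y \<in> X s \<Longrightarrow> x + y \<in> X s"
  and scl_in_X: "x \<in> X s \<Longrightarrow> scl a x \<in> X s"
  using banach unfolding banach_on_def subspace_on_def by blast+

lemma diff_in_X: "x \<in> X s \<Longrightarrow> y \<in> X s \<Longrightarrow> x - y \<in> X s"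
  using add_in_X[of x s "scl (-1) y"] scl_in_X[of y s "-1"] by simp

lemma N_nonneg: "x \<in> X s \<Longrightarrow> N s x \<ge> 0"
  and N_eq_0_iff: "x \<in> X s \<Longrightarrow> N s x = 0 \<longleftrightarrow> x = 0"
  and N_scl: "x \<in> X s \<Longrightarrow> N s (scl a x) = norm a * N s x"
  using banach unfolding banach_on_def norm_on_def by blast+

lemma X_Suc_subset: "X (Suc s) \<subseteq> X s"
  using X_props unfolding props_iii_def by blast

lemma X_antimono: "s \<le> t \<Longrightarrow> X t \<subseteq> X s"
  by (induction t rule: dec_induct) (use X_Suc_subset in auto)

lemma N_mono: "s \<le> t \<Longrightarrow> y \<in> X t \<Longrightarrow> N s y \<le> N t y"
proof (induction t rule: dec_induct)
  case (step t)
  then have "N s y \<le> N t y" using X_Suc_subset by blast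
  also have "\<dots> \<le> N (Suc t) y" using X_props step.prems unfolding props_iii_def by blast
  finally show ?case .
qed simp

lemma XF_dense: "dense_on XF (X s) (N s)"
  using X_props unfolding props_iii_def by blast

lemma g_add: "x \<in> X 0 \<Longrightarrow> y \<in> X 0 \<Longrightarrow> g i (x + y) = g i x + g i y"
  and g_scl: "x \<in> X 0 \<Longrightarrow> g i (scl a x) = a * g i x"
  using g_dual unfolding dual_set_def lin_fun_def by blast+

lemma g_diff: "x \<in> X 0 \<Longrightarrow> y \<in> X 0 \<Longrightarrow> g i (x - y) = g i x - g i y"
  using g_add[of x "scl (-1) y" i] g_scl[of y i "-1"] scl_in_X[of y 0 "-1"] by simp

lemma g_bound: "\<exists>C>0. \<forall>s. \<forall>x\<in>X s. norm (g i x) \<le> C * N s x"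
proof -
  obtain C where C: "\<forall>x\<in>X 0. norm (g i x) \<le> C * N 0 x"
    using g_dual unfolding dual_set_def bounded_fun_def by blast
  have "norm (g i x) \<le> max C 1 * N s x" if "x \<in> X s" for s x
  proof -
    have "x \<in> X 0" using that X_antimono[of 0 s] by auto
    then have "norm (g i x) \<le> max C 1 * N 0 x"
      using C N_nonneg by (meson max.cobounded1 mult_right_mono order.trans)
    also have "\<dots> \<le> max C 1 * N s x" using N_mono[of 0 s x] that by (intro mult_left_mono) auto
    finally show ?thesis .
  qed
  then show ?thesis by (intro exI[of _ "max C 1"]) auto
qed

definition Cg :: "nat \<Rightarrow> real" where
  "Cg i = (SOME C. C > 0 \<and> (\<forall>s. \<forall>x\<in>X s. norm (g i x) \<le> C * N s x))"

lemma Cg_pos: "Cg i > 0" and norm_g_le: "x \<in> X s \<Longrightarrow> norm (g i x) \<le> Cg i * N s x"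
  using someI_ex[OF g_bound[of i]] unfolding Cg_def by blast+

lemma g_restrict_dual: "(\<lambda>x. if x \<in> X s then g i x else 0) \<in> dual_set scl (X s) (N s)"
proof -
  have X0: "x \<in> X 0" if "x \<in> X s" for x using X_antimono[of 0 s] that by auto
  show ?thesis
    unfolding dual_set_def lin_fun_def bounded_fun_def
    using add_in_X scl_in_X g_add g_scl norm_g_le X0 by (auto intro!: exI[of _ "Cg i"])
qed

lemma exists_XF_g_eq_1: "\<exists>f\<in>XF. g j f = 1"
proof -
  obtain x where x: "x \<in> X 0" "g j x \<noteq> 0" using g_nonzero by blast
  then have "norm (g j x) / Cg j > 0" using Cg_pos by simp
  then obtain y where y: "y \<in> XF" "N 0 (x - y) < norm (g j x) / Cg j"
    using XF_dense[of 0] x unfolding dense_on_def by blast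
  then have "y \<in> X 0" by blast
  have "norm (g j x - g j y) \<le> Cg j * N 0 (x - y)"
    using norm_g_le[OF diff_in_X[OF x(1) \<open>y \<in> X 0\<close>]] g_diff[OF x(1) \<open>y \<in> X 0\<close>] by simp
  also have "\<dots> < norm (g j x)" using y(2) Cg_pos[of j] by (simp add: field_simps)
  finally have "g j y \<noteq> 0" by auto
  then have "g j (scl (inverse (g j y)) y) = 1" using g_scl[OF \<open>y \<in> X 0\<close>] by simp
  moreover have "scl (inverse (g j y)) y \<in> XF" using y(1) scl_in_X by blast
  ultimately show ?thesis by blast
qed

lemma mem_Ms_iff: "f \<in> Ms s c \<longleftrightarrow> f \<in> X s \<and> (\<forall>i. norm (c i) \<le> norm (g i f))"
  unfolding Mset_def by simp

lemma mem_Th_iff: "c \<in> Th s \<longleftrightarrow> Ms s c \<noteq> {}"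
  unfolding Theta_def by simp

lemma coefficients_in_Ms: "f \<in> X s \<Longrightarrow> f \<in> Ms s (\<lambda>i. g i f)"
  by (simp add: mem_Ms_iff)

lemma Tn_le: "f \<in> Ms s c \<Longrightarrow> Tn s c \<le> N s f"
  unfolding Theta_norm_def
  by (rule cInf_lower) (auto intro!: bdd_belowI[of _ 0] simp: mem_Ms_iff N_nonneg)

lemma Tn_greatest: "c \<in> Th s \<Longrightarrow> (\<And>f. f \<in> Ms s c \<Longrightarrow> a \<le> N s f) \<Longrightarrow> a \<le> Tn s c"
  unfolding Theta_norm_def mem_Th_iff by (rule cInf_greatest) auto

lemma Tn_nonneg: "c \<in> Th s \<Longrightarrow> 0 \<le> Tn s c"
  by (rule Tn_greatest) (auto simp: mem_Ms_iff N_nonneg)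

lemma Tn_less_witness: "c \<in> Th s \<Longrightarrow> Tn s c < e \<Longrightarrow> \<exists>f\<in>Ms s c. N s f < e"
  unfolding Theta_norm_def mem_Th_iff using cInf_lessD[of "N s ` Ms s c" e] by auto

lemma Th_solid: "c \<in> Th s \<Longrightarrow> (\<And>i. norm (d i) \<le> norm (c i)) \<Longrightarrow> d \<in> Th s \<and> Tn s d \<le> Tn s c"
proof -
  assume "c \<in> Th s" and "\<And>i. norm (d i) \<le> norm (c i)"
  then have sub: "Ms s c \<subseteq> Ms s d" by (auto simp: mem_Ms_iff) (meson order.trans)
  then have "d \<in> Th s" using \<open>c \<in> Th s\<close> unfolding mem_Th_iff by blast
  moreover have "Tn s d \<le> Tn s c" using \<open>c \<in> Th s\<close> by (rule Tn_greatest) (use sub Tn_le in blast)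
  ultimately show ?thesis by blast
qed

lemma tail_seq_in_Th: "c \<in> Th s \<Longrightarrow> tail_seq n c \<in> Th s \<and> Tn s (tail_seq n c) \<le> Tn s c"
  using Th_solid[of c s "tail_seq n c"] unfolding tail_seq_def by auto

lemma solid_Th: "solid (Th s) (Tn s)"
  unfolding solid_def
proof (intro ballI allI impI)
  fix c d :: "nat \<Rightarrow> 'k"
  assume "c \<in> Th s" "\<forall>i. norm (d i) \<le> norm (c i)"
  then show "d \<in> Th s \<and> Tn s d \<le> Tn s c" using Th_solid by blast
qed

lemma Th_coord_bound: "c \<in> Th s \<Longrightarrow> norm (c i) \<le> Cg i * Tn s c"
proof -
  assume "c \<in> Th s"
  have "norm (c i) / Cg i \<le> Tn s c"
  proof (rule Tn_greatest[OF \<open>c \<in> Th s\<close>])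
    fix f assume "f \<in> Ms s c"
    then have "norm (c i) \<le> Cg i * N s f" using norm_g_le[of f s i] unfolding mem_Ms_iff by (meson order.trans)
    then show "norm (c i) / Cg i \<le> N s f" using Cg_pos[of i] by (simp add: divide_le_eq mult.commute)
  qed
  then show ?thesis using Cg_pos[of i] by (simp add: divide_le_eq mult.commute)
qed

lemma Th_coord_summable:
  assumes d: "\<And>k. d k \<in> Th s" and d_small: "\<And>k. Tn s (d k) < (1/2) ^ k"
  shows "summable (\<lambda>k. norm (d k i))"
proof (rule summable_comparison_test)
  have "norm (d n i) \<le> Cg i * (1/2) ^ n" for n
  proof -
    have "norm (d n i) \<le> Cg i * Tn s (d n)" by (rule Th_coord_bound[OF d])
    also have "\<dots> \<le> Cg i * (1/2) ^ n" using d_small[of n] Cg_pos[of i] by (intro mult_left_mono) auto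
    finally show ?thesis .
  qed
  then show "\<exists>N. \<forall>n\<ge>N. norm (norm (d n i)) \<le> Cg i * (1/2) ^ n" by simp
  show "summable (\<lambda>n. Cg i * (1/2::real) ^ n)" by (intro summable_mult summable_geometric) simp
qed

lemma zero_in_Th: "(\<lambda>i. 0) \<in> Th s" and Tn_zero: "Tn s (\<lambda>i. 0) = 0"
proof -
  have "0 \<in> Ms s (\<lambda>i. 0)" unfolding mem_Ms_iff using zero_in_X by simp
  then show z: "(\<lambda>i. 0) \<in> Th s" unfolding mem_Th_iff by blast
  have "N s 0 = 0" using N_eq_0_iff[OF zero_in_X] by simp
  then have "Tn s (\<lambda>i. 0) \<le> 0" using Tn_le[OF \<open>0 \<in> Ms s (\<lambda>i. 0)\<close>] by simp
  then show "Tn s (\<lambda>i. 0) = 0" using Tn_nonneg[OF z] by simp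
qed

lemma scl_in_Ms: "f \<in> Ms s c \<Longrightarrow> scl a f \<in> Ms s (\<lambda>i. a * c i)"
  using scl_in_X X_antimono[of 0 s] g_scl by (auto simp: mem_Ms_iff norm_mult mult_left_mono)

lemma Tn_scl_le: "c \<in> Th s \<Longrightarrow> (\<lambda>i. a * c i) \<in> Th s \<and> Tn s (\<lambda>i. a * c i) \<le> norm a * Tn s c"
proof (cases "a = 0")
  case False
  assume "c \<in> Th s"
  then have "(\<lambda>i. a * c i) \<in> Th s" using scl_in_Ms unfolding mem_Th_iff by blast
  moreover have "Tn s (\<lambda>i. a * c i) / norm a \<le> Tn s c"
  proof (rule Tn_greatest[OF \<open>c \<in> Th s\<close>])
    fix f assume f: "f \<in> Ms s c"
    have "Tn s (\<lambda>i. a * c i) \<le> N s (scl a f)" using Tn_le[OF scl_in_Ms[OF f]] .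
    also have "\<dots> = norm a * N s f" using f N_scl unfolding mem_Ms_iff by blast
    finally show "Tn s (\<lambda>i. a * c i) / norm a \<le> N s f" using False by (simp add: divide_le_eq mult.commute)
  qed
  ultimately show ?thesis using False by (simp add: divide_le_eq mult.commute)
qed (simp add: zero_in_Th Tn_zero)

lemma Tn_scl: "c \<in> Th s \<Longrightarrow> (\<lambda>i. a * c i) \<in> Th s \<and> Tn s (\<lambda>i. a * c i) = norm a * Tn s c"
proof (cases "a = 0")
  case False
  assume "c \<in> Th s"
  then have ac: "(\<lambda>i. a * c i) \<in> Th s" "Tn s (\<lambda>i. a * c i) \<le> norm a * Tn s c" using Tn_scl_le by auto
  have "(\<lambda>i. inverse a * (a * c i)) = c" using False by auto
  then have "Tn s c \<le> norm (inverse a) * Tn s (\<lambda>i. a * c i)"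
    using Tn_scl_le[OF ac(1), of "inverse a"] by simp
  then have "norm a * Tn s c \<le> norm a * (norm (inverse a) * Tn s (\<lambda>i. a * c i))"
    by (rule mult_left_mono) simp
  also have "\<dots> = Tn s (\<lambda>i. a * c i)" using False by (simp add: norm_inverse)
  finally show ?thesis using ac by simp
qed (simp add: zero_in_Th Tn_zero)

lemma Tn_eq_0_iff: "c \<in> Th s \<Longrightarrow> Tn s c = 0 \<longleftrightarrow> c = (\<lambda>i. 0)"
  using Th_coord_bound Tn_zero by fastforce

lemma unit_seq_in_Th: "unit_seq j \<in> Th s"
proof -
  obtain f where "f \<in> XF" "g j f = 1" using exists_XF_g_eq_1 by blast
  then have "f \<in> Ms s (unit_seq j)" unfolding mem_Ms_iff unit_seq_def by auto
  then show ?thesis unfolding mem_Th_iff by blast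
qed

lemma Th_Suc_subset: "Th (Suc s) \<subseteq> Th s" and Tn_Suc: "c \<in> Th (Suc s) \<Longrightarrow> Tn s c \<le> Tn (Suc s) c"
proof -
  have sub: "Ms (Suc s) c \<subseteq> Ms s c" for c using X_Suc_subset[of s] by (auto simp: mem_Ms_iff)
  then show "Th (Suc s) \<subseteq> Th s" unfolding Theta_def by blast
  assume c: "c \<in> Th (Suc s)"
  show "Tn s c \<le> Tn (Suc s) c"
  proof (rule Tn_greatest[OF c])
    fix f assume f: "f \<in> Ms (Suc s) c"
    then have "Tn s c \<le> N s f" using sub Tn_le by blast
    also have "\<dots> \<le> N (Suc s) f" using N_mono[of s "Suc s" f] f unfolding mem_Ms_iff by auto
    finally show "Tn s c \<le> N (Suc s) f" .
  qed
qed

lemma X_bounded_witness_limit: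
  assumes r: "\<And>n. r n \<in> X s" and bounded: "\<And>n. N s (r n) \<le> C"
    and p: "\<And>n i. p n i \<le> norm (g i (r n))" and mono: "\<And>i. incseq (\<lambda>n. p n i)"
  shows "\<exists>x\<in>X s. \<forall>i n. p n i \<le> norm (g i x)"
proof -
  obtain U :: "nat filter" where U: "ultrafilter U" "U \<le> sequentially"
    using ultrafilter_exists_le[of sequentially] by auto
  obtain x where x: "x \<in> X s" "\<forall>\<phi>\<in>dual_set scl (X s) (N s). ((\<lambda>n. \<phi> (r n)) \<longlongrightarrow> \<phi> x) U"
    using reflexive_ultrafilter_weak_limit[OF banach X_refl[rule_format], where r=r, OF r bounded U(1)]
    by blast
  have "p m i \<le> norm (g i x)" for i m
  proof -
    have "((\<lambda>n. g i (r n)) \<longlongrightarrow> g i x) U"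
      using bspec[OF x(2) g_restrict_dual[of s i]] r x(1) by simp
    then have lim: "((\<lambda>n. norm (g i (r n))) \<longlongrightarrow> norm (g i x)) U" by (rule tendsto_norm)
    show ?thesis
    proof (rule tendsto_lowerbound[OF lim])
      have "eventually (\<lambda>n. n \<ge> m) U" using filter_leD[OF U(2)] eventually_ge_at_top by blast
      then show "eventually (\<lambda>n. p m i \<le> norm (g i (r n))) U"
      proof (rule eventually_mono)
        fix n assume "m \<le> n"
        then show "p m i \<le> norm (g i (r n))" using incseqD[OF mono[of i] \<open>m \<le> n\<close>] p[of n i] by linarith
      qed
      show "U \<noteq> bot" using U(1) unfolding ultrafilter_def by blast
    qed
  qed
  then show ?thesis using x(1) by blast
qed

lemma F_Bessel: "F_Bessel scl X N g Th Tn"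
  unfolding F_Bessel_def
proof (intro conjI allI ballI)
  fix i
  show "lin_fun scl XF (g i)"
    unfolding lin_fun_def using g_add[of _ _ i] g_scl[of _ i] by auto
  show "\<exists>s C. \<forall>f\<in>XF. norm (g i f) \<le> C * N s f"
    using norm_g_le[of _ 0 i] by auto
next
  fix f assume "f \<in> XF"
  show "(\<lambda>i. g i f) \<in> (\<Inter>s. Th s)"
  proof
    fix s
    show "(\<lambda>i. g i f) \<in> Th s" using coefficients_in_Ms[of f s] \<open>f \<in> XF\<close> unfolding mem_Th_iff by auto
  qed
next
  fix s
  have "Tn s (\<lambda>i. g i f) \<le> 1 * N s f" if "f \<in> XF" for f
    using Tn_le[OF coefficients_in_Ms[of f s]] that by auto
  then show "\<exists>B. \<forall>f\<in>XF. Tn s (\<lambda>i. g i f) \<le> B * N s f" by blast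
qed

lemma pre_F_frame:
  assumes "\<forall>s. condA3 X N g s"
  shows "pre_F_frame scl X N g Th Tn"
  unfolding pre_F_frame_def
proof (intro conjI allI F_Bessel)
  fix s
  obtain A where "0 < A" and A: "\<forall>f\<in>X s. \<forall>ft\<in>Ms s (\<lambda>i. g i f). A * N s f \<le> N s ft"
    using assms unfolding condA3_def by blast
  have "A * N s f \<le> Tn s (\<lambda>i. g i f)" if "f \<in> XF" for f
  proof (rule Tn_greatest)
    have "f \<in> X s" using that by blast
    then show "(\<lambda>i. g i f) \<in> Th s" using coefficients_in_Ms unfolding mem_Th_iff by blast
    show "A * N s f \<le> N s ft" if "ft \<in> Ms s (\<lambda>i. g i f)" for ft using A \<open>f \<in> X s\<close> that by blast
  qed
  then show "\<exists>A>0. \<forall>f\<in>XF. A * N s f \<le> Tn s (\<lambda>i. g i f)" using \<open>0 < A\<close> by blast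
qed

end

locale coefficient_space_A1 = coefficient_space scl X N g
  for scl :: "'k::real_normed_field \<Rightarrow> 'a::ab_group_add \<Rightarrow> 'a" and X N g +
  assumes A1: "\<forall>s. condA1 X N g s"
begin

lemma Th_add: "c \<in> Th s \<Longrightarrow> d \<in> Th s \<Longrightarrow> (\<lambda>i. c i + d i) \<in> Th s \<and> Tn s (\<lambda>i. c i + d i) \<le> Tn s c + Tn s d"
proof -
  assume c: "c \<in> Th s" and d: "d \<in> Th s"
  have ex: "\<exists>r\<in>Ms s (\<lambda>i. c i + d i). N s r \<le> N s f + N s h" if "f \<in> Ms s c" "h \<in> Ms s d" for f h
    using A1[unfolded condA1_def, rule_format, OF c d that] .
  obtain f h where "f \<in> Ms s c" "h \<in> Ms s d" using c d unfolding mem_Th_iff by blast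
  then have cd: "(\<lambda>i. c i + d i) \<in> Th s" using ex unfolding mem_Th_iff by blast
  have le: "Tn s (\<lambda>i. c i + d i) \<le> N s f + N s h" if "f \<in> Ms s c" "h \<in> Ms s d" for f h
    using ex[OF that] Tn_le by (meson order.trans)
  \<comment> \<open>pass to the infimum in \<open>f\<close>, then in \<open>h\<close>\<close>
  have "Tn s (\<lambda>i. c i + d i) - Tn s c \<le> N s h" if h: "h \<in> Ms s d" for h
  proof -
    have "Tn s (\<lambda>i. c i + d i) - N s h \<le> Tn s c"
      by (rule Tn_greatest[OF c]) (use le[OF _ h] in force)
    then show ?thesis by simp
  qed
  then have "Tn s (\<lambda>i. c i + d i) - Tn s c \<le> Tn s d" by (rule Tn_greatest[OF d])
  then show ?thesis using cd by simp
qed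

lemma Th_diff: "c \<in> Th s \<Longrightarrow> d \<in> Th s \<Longrightarrow> (\<lambda>i. c i - d i) \<in> Th s \<and> Tn s (\<lambda>i. c i - d i) \<le> Tn s c + Tn s d"
  using Th_add[of c s "\<lambda>i. - d i"] Tn_scl[of d s "-1"] by simp

lemma trunc_seq_in_Th: "trunc_seq k c \<in> Th s \<and> Tn s (trunc_seq k c) \<le> (\<Sum>i<k. norm (c i) * Tn s (unit_seq i))"
proof (induction k)
  case 0
  have "trunc_seq 0 c = (\<lambda>i. 0)" unfolding trunc_seq_def by simp
  then show ?case using zero_in_Th Tn_zero by simp
next
  case (Suc k)
  have split: "trunc_seq (Suc k) c = (\<lambda>i. trunc_seq k c i + c k * unit_seq k i)"
    unfolding trunc_seq_def unit_seq_def by (auto simp: fun_eq_iff less_Suc_eq)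
  have u: "(\<lambda>i. c k * unit_seq k i) \<in> Th s" "Tn s (\<lambda>i. c k * unit_seq k i) = norm (c k) * Tn s (unit_seq k)"
    using Tn_scl[OF unit_seq_in_Th] by auto
  show ?case unfolding split using Th_add[OF conjunct1[OF Suc.IH] u(1)] Suc.IH u(2) by auto
qed

lemma Th_subspace: "subspace_on seq_scl (Th s)"
  unfolding subspace_on_def
proof (intro conjI ballI allI)
  show "0 \<in> Th s" using zero_in_Th by (simp add: zero_fun_def)
  show "x + y \<in> Th s" if "x \<in> Th s" "y \<in> Th s" for x y
    using Th_add[OF that] by (simp add: plus_fun_def)
  show "seq_scl a x \<in> Th s" if "x \<in> Th s" for a x
    using Tn_scl[OF that] by (simp add: seq_scl_def)
qed

lemma Th_norm_on: "norm_on seq_scl (Th s) (Tn s)"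
  unfolding norm_on_def
proof (intro conjI ballI allI)
  fix x assume x: "x \<in> Th s"
  show "0 \<le> Tn s x" using Tn_nonneg[OF x] .
  show "Tn s x = 0 \<longleftrightarrow> x = 0" using Tn_eq_0_iff[OF x] by (simp add: zero_fun_def)
  show "Tn s (seq_scl a x) = norm a * Tn s x" for a using Tn_scl[OF x] by (simp add: seq_scl_def)
next
  fix x y assume "x \<in> Th s" "y \<in> Th s"
  then show "Tn s (x + y) \<le> Tn s x + Tn s y" using Th_add by (simp add: plus_fun_def)
qed

lemma Th_partial_sum_witness:
  fixes n :: nat
  assumes "\<And>k. d k \<in> Th s" and "\<And>k. Tn s (d k) < e k"
  shows "\<exists>r\<in>X s. (\<forall>i. (\<Sum>k<n. norm (d k i)) \<le> norm (g i r)) \<and> N s r \<le> (\<Sum>k<n. e k)"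
proof (induction n)
  case 0
  show ?case using zero_in_X N_eq_0_iff[OF zero_in_X] by (intro bexI[of _ 0]) auto
next
  case (Suc n)
  then obtain r where r: "r \<in> X s" "\<forall>i. (\<Sum>k<n. norm (d k i)) \<le> norm (g i r)" "N s r \<le> (\<Sum>k<n. e k)"
    by blast
  obtain f where f: "f \<in> Ms s (d n)" "N s f < e n" using Tn_less_witness[OF assms] by blast
  have r_in: "r \<in> Ms s (\<lambda>i. of_real (\<Sum>k<n. norm (d k i)))"
    unfolding mem_Ms_iff norm_of_real using r by (simp add: sum_nonneg)
  have f_in: "f \<in> Ms s (\<lambda>i. of_real (norm (d n i)))" using f(1) unfolding mem_Ms_iff by simp
  obtain r' where r': "r' \<in> Ms s (\<lambda>i. of_real (\<Sum>k<n. norm (d k i)) + of_real (norm (d n i)))"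
    "N s r' \<le> N s r + N s f"
    using A1[unfolded condA1_def, rule_format, OF _ _ r_in f_in] r_in f_in unfolding mem_Th_iff by blast
  then have "r' \<in> X s" "\<forall>i. (\<Sum>k<Suc n. norm (d k i)) \<le> norm (g i r')"
    unfolding mem_Ms_iff by (simp_all add: norm_of_real_add_nonneg sum_nonneg del: of_real_sum)
  moreover have "N s r' \<le> (\<Sum>k<Suc n. e k)" using r'(2) r(3) f(2) by simp
  ultimately show ?case by blast
qed

lemma Th_summable_dominant:
  assumes d: "\<And>k. d k \<in> Th s" and d_small: "\<And>k. Tn s (d k) < (1/2) ^ k"
  shows "(\<lambda>i. of_real (\<Sum>k. norm (d k i))) \<in> Th s"
proof -
  note summable = Th_coord_summable[OF d d_small]
  have "(\<Sum>k<n. (1/2::real) ^ k) \<le> 2" for n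
    using sum_le_suminf[of "\<lambda>k. (1/2::real) ^ k" "{..<n}"] suminf_geometric[of "1/2::real"]
    by (simp add: summable_geometric)
  then have "\<exists>r\<in>X s. (\<forall>i. (\<Sum>k<n. norm (d k i)) \<le> norm (g i r)) \<and> N s r \<le> 2" for n
    using Th_partial_sum_witness[OF d d_small, where n=n] by (meson order.trans)
  then obtain r where r: "\<And>n. r n \<in> X s" "\<And>n i. (\<Sum>k<n. norm (d k i)) \<le> norm (g i (r n))"
    "\<And>n. N s (r n) \<le> 2"
    by metis
  have inc: "incseq (\<lambda>n. \<Sum>k<n. norm (d k i))" for i by (rule incseq_SucI) simp
  obtain x where "x \<in> X s" and "\<And>i n. (\<Sum>k<n. norm (d k i)) \<le> norm (g i x)"
    using X_bounded_witness_limit[where p="\<lambda>n i. \<Sum>k<n. norm (d k i)", OF r(1) r(3) r(2) inc] by blast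
  then have "(\<Sum>k. norm (d k i)) \<le> norm (g i x)" for i using summable by (intro suminf_le_const) auto
  then have "x \<in> Ms s (\<lambda>i. of_real (\<Sum>k. norm (d k i)))"
    unfolding mem_Ms_iff using \<open>x \<in> X s\<close> summable by (simp add: suminf_nonneg)
  then show ?thesis unfolding mem_Th_iff by blast
qed

lemma Tn_Cauchy_subseq_tendsto:
  fixes u :: "nat \<Rightarrow> nat \<Rightarrow> 'k"
  assumes u: "\<And>n. u n \<in> Th s" and "x \<in> Th s"
    and Cauchy: "\<forall>e>0. \<exists>M. \<forall>m\<ge>M. \<forall>n\<ge>M. Tn s (u m - u n) < e"
    and "strict_mono \<sigma>" and sub: "(\<lambda>K. Tn s (u (\<sigma> K) - x)) \<longlonglongrightarrow> 0"
  shows "(\<lambda>n. Tn s (u n - x)) \<longlonglongrightarrow> 0"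
proof (rule LIMSEQ_I)
  fix e :: real assume "e > 0"
  then obtain M where M: "\<forall>m\<ge>M. \<forall>n\<ge>M. Tn s (u m - u n) < e / 2" using Cauchy by (meson half_gt_zero)
  obtain K0 where "\<forall>K\<ge>K0. norm (Tn s (u (\<sigma> K) - x) - 0) < e / 2"
    using LIMSEQ_D[OF sub, of "e / 2"] \<open>e > 0\<close> by auto
  then have "norm (Tn s (u (\<sigma> (max M K0)) - x) - 0) < e / 2" by simp
  then have K: "Tn s (u (\<sigma> (max M K0)) - x) < e / 2" by simp
  have "\<sigma> (max M K0) \<ge> M" using seq_suble[OF \<open>strict_mono \<sigma>\<close>, of "max M K0"] by simp
  have "norm (Tn s (u n - x) - 0) < e" if "n \<ge> M" for n
  proof -
    let ?m = "u (\<sigma> (max M K0))"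
    have "u n - x = (\<lambda>i. (u n - ?m) i + (?m - x) i)" by auto
    moreover have "u n - ?m \<in> Th s" "?m - x \<in> Th s" "u n - x \<in> Th s"
      using Th_diff[OF u u] Th_diff[OF u \<open>x \<in> Th s\<close>] by (simp_all add: fun_diff_def)
    ultimately have "Tn s (u n - x) \<le> Tn s (u n - ?m) + Tn s (?m - x)"
      using Th_add[OF \<open>u n - ?m \<in> Th s\<close> \<open>?m - x \<in> Th s\<close>] by simp
    also have "\<dots> < e"
      using M[rule_format, OF that \<open>\<sigma> (max M K0) \<ge> M\<close>] K by linarith
    finally show ?thesis using Tn_nonneg[OF \<open>u n - x \<in> Th s\<close>] by simp
  qed
  then show "\<exists>no. \<forall>n\<ge>no. norm (Tn s (u n - x) - 0) < e" by blast
qed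

lemma Th_Cauchy_coordinate_limit:
  assumes u: "\<And>n. u n \<in> Th s" and Cauchy: "\<forall>e>0. \<exists>M. \<forall>m\<ge>M. \<forall>n\<ge>M. Tn s (u m - u n) < e"
  shows "\<exists>L. (\<lambda>n. u n i) \<longlonglongrightarrow> L"
proof -
  have "Cauchy (\<lambda>n. u n i)"
  proof (rule metric_CauchyI)
    fix e :: real assume "e > 0"
    then obtain M where M: "\<forall>m\<ge>M. \<forall>n\<ge>M. Tn s (u m - u n) < e / Cg i"
      using Cauchy Cg_pos[of i] by (meson divide_pos_pos)
    have "dist (u m i) (u n i) < e" if "m \<ge> M" "n \<ge> M" for m n
    proof -
      have "u m - u n \<in> Th s" using Th_diff[OF u u, of m n] by (simp add: fun_diff_def)
      then have "norm ((u m - u n) i) \<le> Cg i * Tn s (u m - u n)" by (rule Th_coord_bound)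
      also have "\<dots> < Cg i * (e / Cg i)" using M that Cg_pos[of i] by (intro mult_strict_left_mono) auto
      finally show ?thesis using Cg_pos[of i] by (simp add: dist_norm)
    qed
    then show "\<exists>M. \<forall>m\<ge>M. \<forall>n\<ge>M. dist (u m i) (u n i) < e" by blast
  qed
  then show ?thesis using Cauchy_convergent_real_normed_field convergent_def by blast
qed

end

locale coefficient_space_A12 = coefficient_space_A1 scl X N g
  for scl :: "'k::real_normed_field \<Rightarrow> 'a::ab_group_add \<Rightarrow> 'a" and X N g +
  assumes A2: "\<forall>s. condA2 X N g s"
begin

lemma Tn_tail_seq_tendsto_0: "c \<in> Th s \<Longrightarrow> (\<lambda>n. Tn s (tail_seq n c)) \<longlonglongrightarrow> 0"
proof (rule LIMSEQ_I)
  fix e :: real assume c: "c \<in> Th s" and "0 < e"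
  then obtain k f where "f \<in> Ms s (tail_seq k c)" "N s f < e"
    using A2 unfolding condA2_def by blast
  then have k: "tail_seq k c \<in> Th s" "Tn s (tail_seq k c) < e"
    using Tn_le[of f s "tail_seq k c"] unfolding mem_Th_iff by auto
  have "norm (Tn s (tail_seq n c) - 0) < e" if "n \<ge> k" for n
  proof -
    have "tail_seq n c = tail_seq n (tail_seq k c)" using that unfolding tail_seq_def by auto
    then have "Tn s (tail_seq n c) \<le> Tn s (tail_seq k c)"
      by (simp only:) (rule conjunct2[OF tail_seq_in_Th[OF k(1)]])
    then show ?thesis using k Tn_nonneg[OF conjunct1[OF tail_seq_in_Th[OF c]]] by simp
  qed
  then show "\<exists>no. \<forall>n\<ge>no. norm (Tn s (tail_seq n c) - 0) < e" by blast
qed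

lemma Tn_diff_trunc_seq_tendsto_0: "c \<in> Th s \<Longrightarrow> (\<lambda>n. Tn s (c - trunc_seq n c)) \<longlonglongrightarrow> 0"
  unfolding diff_trunc_seq by (rule Tn_tail_seq_tendsto_0)

text \<open>A common tail is small by \<open>(\<A>\<^sub>2)\<close>, and the finitely many remaining coordinates converge.\<close>
lemma Tn_dominated_tendsto_0:
  assumes b: "b \<in> Th s" and dom: "\<And>K i. norm (w K i) \<le> norm (b i)" and lim: "\<And>i. (\<lambda>K. w K i) \<longlonglongrightarrow> 0"
  shows "(\<lambda>K. Tn s (w K)) \<longlonglongrightarrow> 0"
proof (rule LIMSEQ_I)
  fix e :: real assume "e > 0"
  then obtain k where "norm (Tn s (tail_seq k b) - 0) < e / 2"
    using LIMSEQ_D[OF Tn_tail_seq_tendsto_0[OF b], of "e / 2"] by auto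
  then have k: "Tn s (tail_seq k b) < e / 2" by simp
  have "(\<lambda>K. \<Sum>i<k. norm (w K i) * Tn s (unit_seq i)) \<longlonglongrightarrow> (\<Sum>i<k. 0 * Tn s (unit_seq i))"
    by (intro tendsto_sum tendsto_mult tendsto_const tendsto_norm_zero lim)
  then have "(\<lambda>K. \<Sum>i<k. norm (w K i) * Tn s (unit_seq i)) \<longlonglongrightarrow> 0" by simp
  then obtain K0 where K0: "\<forall>K\<ge>K0. norm ((\<Sum>i<k. norm (w K i) * Tn s (unit_seq i)) - 0) < e / 2"
    using LIMSEQ_D[of _ 0 "e / 2"] half_gt_zero[OF \<open>e > 0\<close>] by blast
  have "norm (Tn s (w K) - 0) < e" if "K \<ge> K0" for K
  proof -
    have tail: "tail_seq k (w K) \<in> Th s \<and> Tn s (tail_seq k (w K)) \<le> Tn s (tail_seq k b)"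
      using Th_solid[OF conjunct1[OF tail_seq_in_Th[OF b, of k]], of "tail_seq k (w K)"] dom
      unfolding tail_seq_def by auto
    have "w K \<in> Th s" using Th_solid[OF b] dom by blast
    have "w K = (\<lambda>i. tail_seq k (w K) i + trunc_seq k (w K) i)" by (rule tail_seq_add_trunc_seq)
    then have "Tn s (w K) \<le> Tn s (tail_seq k (w K)) + Tn s (trunc_seq k (w K))"
      using Th_add[OF conjunct1[OF tail] conjunct1[OF trunc_seq_in_Th[where k=k and c="w K" and s=s]]] by simp
    also have "\<dots> < e / 2 + e / 2"
    proof -
      have "(\<Sum>i<k. norm (w K i) * Tn s (unit_seq i)) < e / 2" using K0 that by auto
      then show ?thesis using tail k conjunct2[OF trunc_seq_in_Th[where k=k and c="w K" and s=s]] by linarith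
    qed
    finally show ?thesis using Tn_nonneg[OF \<open>w K \<in> Th s\<close>] by simp
  qed
  then show "\<exists>no. \<forall>n\<ge>no. norm (Tn s (w n) - 0) < e" by blast
qed

lemma Th_rapid_subseq_limit:
  fixes u :: "nat \<Rightarrow> nat \<Rightarrow> 'k"
  assumes u: "\<And>n. u n \<in> Th s" and Cauchy: "\<forall>e>0. \<exists>M. \<forall>m\<ge>M. \<forall>n\<ge>M. Tn s (u m - u n) < e"
    and "strict_mono \<sigma>" and rapid: "\<And>k. Tn s (u (\<sigma> (Suc k)) - u (\<sigma> k)) < (1/2) ^ k"
  shows "\<exists>x\<in>Th s. (\<lambda>K. Tn s (u (\<sigma> K) - x)) \<longlonglongrightarrow> 0"
proof -
  have diff_in: "u m - u n \<in> Th s" for m n using Th_diff[OF u u, of m n] by (simp add: fun_diff_def)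
  define d where "d k = u (\<sigma> (Suc k)) - u (\<sigma> k)" for k
  define b where "b i = (\<Sum>k. norm (d k i))" for i
  have d_in: "d k \<in> Th s" and d_small: "Tn s (d k) < (1/2) ^ k" for k
    unfolding d_def by (rule diff_in, rule rapid)
  have summable: "summable (\<lambda>k. norm (d k i))" for i by (rule Th_coord_summable[OF d_in d_small])
  have b_in: "(\<lambda>i. of_real (b i)) \<in> Th s" unfolding b_def by (rule Th_summable_dominant[OF d_in d_small])
  have "b i \<ge> 0" for i unfolding b_def using summable by (simp add: suminf_nonneg)
  with b_in obtain bb where bb: "bb \<in> Th s" "\<And>i. norm (bb i) = b i" by force
  have "\<forall>i. \<exists>L. (\<lambda>n. u n i) \<longlonglongrightarrow> L" using Th_Cauchy_coordinate_limit[OF u Cauchy] by blast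
  then obtain x where x: "\<And>i. (\<lambda>n. u n i) \<longlonglongrightarrow> x i" by metis
  have x_sub: "(\<lambda>n. u (\<sigma> n) i) \<longlonglongrightarrow> x i" for i
    using LIMSEQ_subseq_LIMSEQ[OF x \<open>strict_mono \<sigma>\<close>] by (simp add: comp_def)
  define w where "w K = u (\<sigma> K) - x" for K
  have w_dom: "norm (w K i) \<le> b i" for K i
  proof -
    have "norm (u (\<sigma> n) i - u (\<sigma> K) i) \<le> b i" if "n \<ge> K" for n
    proof -
      have "u (\<sigma> n) i - u (\<sigma> K) i = (\<Sum>k = K..<n. d k i)"
        using sum_Suc_diff'[OF that, of "\<lambda>k. u (\<sigma> k) i"] unfolding d_def by simp
      then have "norm (u (\<sigma> n) i - u (\<sigma> K) i) \<le> (\<Sum>k = K..<n. norm (d k i))" by (simp add: norm_sum)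
      also have "\<dots> \<le> b i" unfolding b_def by (intro sum_le_suminf summable) auto
      finally show ?thesis .
    qed
    then have "norm (x i - u (\<sigma> K) i) \<le> b i"
      by (intro tendsto_upperbound[OF tendsto_norm[OF tendsto_diff[OF x_sub tendsto_const]]])
         (auto simp: eventually_sequentially)
    then show ?thesis unfolding w_def by (simp add: norm_minus_commute)
  qed
  then have w_in: "w K \<in> Th s" for K using Th_solid[OF bb(1), of "w K"] bb(2) by simp
  have "x = u (\<sigma> 0) - w 0" unfolding w_def by simp
  then have "x \<in> Th s" using Th_diff[OF u w_in] by (simp add: fun_diff_def)
  moreover have "(\<lambda>K. Tn s (w K)) \<longlonglongrightarrow> 0"
  proof (rule Tn_dominated_tendsto_0[OF bb(1)])
    show "norm (w K i) \<le> norm (bb i)" for K i using w_dom bb(2) by simp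
    show "(\<lambda>K. w K i) \<longlonglongrightarrow> 0" for i
      using tendsto_diff[OF x_sub tendsto_const, of i "x i"] unfolding w_def by simp
  qed
  ultimately show ?thesis unfolding w_def by blast
qed

lemma Th_complete: "complete_on (Th s) (Tn s)"
  unfolding complete_on_def
proof (intro allI impI, elim conjE)
  fix u :: "nat \<Rightarrow> nat \<Rightarrow> 'k"
  assume "\<forall>n. u n \<in> Th s" and Cauchy: "\<forall>e>0. \<exists>M. \<forall>m\<ge>M. \<forall>n\<ge>M. Tn s (u m - u n) < e"
  then have u: "\<And>n. u n \<in> Th s" by blast
  obtain \<sigma> where \<sigma>: "strict_mono \<sigma>" "\<forall>k. \<forall>m\<ge>\<sigma> k. \<forall>n\<ge>\<sigma> k. Tn s (u m - u n) < (1/2) ^ k"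
    using Cauchy_subseq_geometric[OF Cauchy] by blast
  then have "Tn s (u (\<sigma> (Suc k)) - u (\<sigma> k)) < (1/2) ^ k" for k
    using strict_mono_less_eq[OF \<sigma>(1), of k "Suc k"] by auto
  then obtain x where "x \<in> Th s" and "(\<lambda>K. Tn s (u (\<sigma> K) - x)) \<longlonglongrightarrow> 0"
    using Th_rapid_subseq_limit[OF u Cauchy \<sigma>(1)] by blast
  then show "\<exists>x\<in>Th s. (\<lambda>n. Tn s (u n - x)) \<longlonglongrightarrow> 0"
    using Tn_Cauchy_subseq_tendsto[OF u _ Cauchy \<sigma>(1)] by blast
qed

lemma Th_banach: "banach_on seq_scl (Th s) (Tn s)"
  unfolding banach_on_def using Th_subspace Th_norm_on Th_complete by blast

lemma Th_separable: "separable_on (Th s) (Tn s)"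
proof -
  obtain Q :: "'k set" where Q: "countable Q" "\<And>z e. e > 0 \<Longrightarrow> \<exists>q\<in>Q. norm (z - q) < e"
    using real_normed_field_countable_dense by blast
  define D where "D = (\<lambda>l. trunc_seq (length l) (\<lambda>i. l ! i)) ` lists Q"
  have "\<exists>y\<in>D. Tn s (c - y) < e" if c: "c \<in> Th s" and "e > 0" for c e
  proof -
    obtain k where "norm (Tn s (tail_seq k c) - 0) < e / 2"
      using LIMSEQ_D[OF Tn_tail_seq_tendsto_0[OF c], of "e / 2"] \<open>e > 0\<close> by auto
    then have tail: "Tn s (tail_seq k c) < e / 2" by simp
    define S where "S = (\<Sum>i<k. Tn s (unit_seq i))"
    have "S \<ge> 0" unfolding S_def using Tn_nonneg[OF unit_seq_in_Th] by (simp add: sum_nonneg)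
    define \<delta> where "\<delta> = e / (2 * (1 + S))"
    have "\<delta> > 0" unfolding \<delta>_def using \<open>e > 0\<close> \<open>S \<ge> 0\<close> by simp
    then have "\<forall>i. \<exists>q\<in>Q. norm (c i - q) < \<delta>" using Q(2) by blast
    then obtain q where q: "\<And>i. q i \<in> Q" "\<And>i. norm (c i - q i) < \<delta>" by metis
    have "trunc_seq k q = trunc_seq (length (map q [0..<k])) (\<lambda>i. map q [0..<k] ! i)"
      unfolding trunc_seq_def by (auto simp: fun_eq_iff)
    moreover have "map q [0..<k] \<in> lists Q" using q(1) by auto
    ultimately have "trunc_seq k q \<in> D" unfolding D_def by blast
    have "Tn s (trunc_seq k (\<lambda>i. c i - q i)) \<le> (\<Sum>i<k. norm (c i - q i) * Tn s (unit_seq i))"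
      using trunc_seq_in_Th by blast
    also have "\<dots> \<le> (\<Sum>i<k. \<delta> * Tn s (unit_seq i))"
      using q(2) Tn_nonneg[OF unit_seq_in_Th] by (intro sum_mono mult_right_mono) (auto intro: less_imp_le)
    also have "\<dots> = \<delta> * S" unfolding S_def by (simp add: sum_distrib_left)
    also have "\<dots> < e / 2"
    proof -
      have "\<delta> * (1 + S) = e / 2" unfolding \<delta>_def using \<open>S \<ge> 0\<close> by (simp add: field_simps)
      moreover have "\<delta> * S < \<delta> * (1 + S)" using \<open>\<delta> > 0\<close> by simp
      ultimately show ?thesis by linarith
    qed
    finally have head: "Tn s (trunc_seq k (\<lambda>i. c i - q i)) < e / 2" .
    have "c - trunc_seq k q = (\<lambda>i. tail_seq k c i + trunc_seq k (\<lambda>i. c i - q i) i)"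
      unfolding trunc_seq_def tail_seq_def by (auto simp: fun_eq_iff)
    then have "Tn s (c - trunc_seq k q) \<le> Tn s (tail_seq k c) + Tn s (trunc_seq k (\<lambda>i. c i - q i))"
      using Th_add[OF conjunct1[OF tail_seq_in_Th[OF c]] conjunct1[OF trunc_seq_in_Th]] by simp
    then show ?thesis using tail head \<open>trunc_seq k q \<in> D\<close> by (intro bexI[of _ "trunc_seq k q"]) auto
  qed
  moreover have "countable D" unfolding D_def using Q(1) by simp
  moreover have "D \<subseteq> Th s" unfolding D_def using trunc_seq_in_Th by blast
  ultimately show ?thesis unfolding separable_on_def dense_on_def by blast
qed

lemma ThF_dense: "dense_on (\<Inter>s. Th s) (Th s) (Tn s)"
  unfolding dense_on_def
proof (intro conjI ballI allI impI)
  fix c e assume c: "c \<in> Th s" and "(e::real) > 0"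
  then obtain k where "norm (Tn s (c - trunc_seq k c) - 0) < e"
    using LIMSEQ_D[OF Tn_diff_trunc_seq_tendsto_0[OF c]] by blast
  moreover have "trunc_seq k c \<in> (\<Inter>s. Th s)" using trunc_seq_in_Th by blast
  ultimately show "\<exists>y\<in>\<Inter>s. Th s. Tn s (c - y) < e" by (intro bexI[of _ "trunc_seq k c"]) auto
qed blast

lemma Th_CB: "CB_space (Th s) (Tn s)"
  unfolding CB_space_def BK_space_def
proof (intro conjI allI ballI)
  show "banach_on seq_scl (Th s) (Tn s)" by (rule Th_banach)
  show "\<exists>C. \<forall>c\<in>Th s. norm (c i) \<le> C * Tn s c" for i using Th_coord_bound by blast
  show "unit_seq j \<in> Th s" for j by (rule unit_seq_in_Th)
  fix c assume c: "c \<in> Th s"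
  show "\<exists>!a. (\<lambda>n. Tn s (c - (\<Sum>j<n. seq_scl (a j) (unit_seq j)))) \<longlonglongrightarrow> 0"
  proof (rule ex1I)
    show "(\<lambda>n. Tn s (c - (\<Sum>j<n. seq_scl (c j) (unit_seq j)))) \<longlonglongrightarrow> 0"
      unfolding sum_unit_seq using Tn_diff_trunc_seq_tendsto_0[OF c] .
  next
    fix a assume "(\<lambda>n. Tn s (c - (\<Sum>j<n. seq_scl (a j) (unit_seq j)))) \<longlonglongrightarrow> 0"
    then have lim: "(\<lambda>n. Cg i * Tn s (c - trunc_seq n a)) \<longlonglongrightarrow> Cg i * 0" for i
      unfolding sum_unit_seq by (intro tendsto_mult tendsto_const)
    \<comment> \<open>once \<open>n > i\<close>, the \<open>i\<close>-th coordinate of \<open>c - trunc_seq n a\<close> is \<open>c i - a i\<close>\<close>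
    have "norm (c i - a i) \<le> Cg i * Tn s (c - trunc_seq n a)" if "n > i" for i n
    proof -
      have "c - trunc_seq n a = (\<lambda>j. c j - trunc_seq n a j)" by (simp add: fun_diff_def)
      then have "c - trunc_seq n a \<in> Th s" using Th_diff[OF c conjunct1[OF trunc_seq_in_Th]] by simp
      from Th_coord_bound[OF this, of i] show ?thesis using that by (simp add: trunc_seq_def)
    qed
    then have "norm (c i - a i) \<le> Cg i * 0" for i
      by (intro tendsto_lowerbound[OF lim]) (auto simp: eventually_sequentially intro: exI[of _ "Suc i"])
    then show "a = c" by (simp add: fun_eq_iff)
  qed
qed

lemma Th_props: "props_iii seq_scl Th Tn"
  unfolding props_iii_def
proof (intro conjI allI ballI)
  show "banach_on seq_scl (Th s) (Tn s)" for s by (rule Th_banach)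
  show "separable_on (Th s) (Tn s)" for s by (rule Th_separable)
  show "Th (Suc s) \<subseteq> Th s" for s by (rule Th_Suc_subset)
  show "Tn s c \<le> Tn (Suc s) c" if "c \<in> Th (Suc s)" for s c using Tn_Suc[OF that] .
  show "dense_on (\<Inter>s. Th s) (Th s) (Tn s)" for s by (rule ThF_dense)
  have "unit_seq 0 \<in> (\<Inter>s. Th s)" using unit_seq_in_Th by blast
  moreover have "unit_seq 0 \<noteq> (0 :: nat \<Rightarrow> 'k)" by (simp add: unit_seq_def fun_eq_iff)
  ultimately show "(\<Inter>s. Th s) \<noteq> {0}" by blast
qed

end

theorem corollary5p2:
  fixes scl :: "'k::real_normed_field \<Rightarrow> 'a::ab_group_add \<Rightarrow> 'a"
    and X :: "nat \<Rightarrow> 'a set" and N :: "nat \<Rightarrow> 'a \<Rightarrow> real"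
    and g :: "nat \<Rightarrow> 'a \<Rightarrow> 'k"
  assumes vs: "vector_space scl"
    and X_props: "props_iii scl X N"
    and X_refl: "\<forall>s. reflexive_on scl (X s) (N s)"
    and g_dual: "\<forall>i. g i \<in> dual_set scl (X 0) (N 0)"
    and g_nonzero: "\<forall>i. \<exists>x\<in>X 0. g i x \<noteq> 0"
  shows "((\<forall>s. condA1 X N g s \<and> condA2 X N g s) \<longrightarrow>
            (\<forall>s. solid (Theta X g s) (Theta_norm X N g s) \<and> CB_space (Theta X g s) (Theta_norm X N g s)) \<and>
            props_iii seq_scl (Theta X g) (Theta_norm X N g) \<and>
            F_Bessel scl X N g (Theta X g) (Theta_norm X N g))
       \<and> ((\<forall>s. condA1 X N g s \<and> condA2 X N g s \<and> condA3 X N g s) \<longrightarrow>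
            pre_F_frame scl X N g (Theta X g) (Theta_norm X N g))"
proof -
  interpret coefficient_space scl X N g
    using assms by (rule coefficient_space.intro)
  show ?thesis
  proof (intro conjI impI)
    assume "\<forall>s. condA1 X N g s \<and> condA2 X N g s"
    then interpret coefficient_space_A12 scl X N g
      by (intro coefficient_space_A12.intro coefficient_space_A1.intro coefficient_space_A12_axioms.intro
          coefficient_space_A1_axioms.intro coefficient_space_axioms) auto
    show "\<forall>s. solid (Theta X g s) (Theta_norm X N g s) \<and> CB_space (Theta X g s) (Theta_norm X N g s)"
      using solid_Th Th_CB by simp
    show "props_iii seq_scl (Theta X g) (Theta_norm X N g)" by (rule Th_props)
    show "F_Bessel scl X N g (Theta X g) (Theta_norm X N g)" by (rule F_Bessel)
  next
    assume "\<forall>s. condA1 X N g s \<and> condA2 X N g s \<and> condA3 X N g s"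
    then show "pre_F_frame scl X N g (Theta X g) (Theta_norm X N g)" by (simp add: pre_F_frame)
  qed
qed

end
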